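(* Let $\Psi=(\Gamma_1,\dots,\Gamma_r)$ and $\Psi'=(\Gamma'_1,\dots,\Gamma'_r)$ be tripartite states of format $r\times I_1\times I_2$ with $\Gamma_1,\dots,\Gamma_r$ linearly independent and $\Gamma'_1,\dots,\Gamma'_r$ linearly independent. Let $U,U'$ be the invertible matrices built from these states and chosen complementary states. Consider the following condition: ( * ) there exist an invertible $P\in\mathbb C^{r\times r}$, an invertible $\overline P\in\mathbb C^{(I_1I_2-r)\times(I_1I_2-r)}$ and some $Y$ such that, with $\widetilde P=\begin{pmatrix}P&Y\\0&\overline P\end{pmatrix}$, $$\operatorname{rank}\mathcal W\big(U\widetilde P\,U'^{-1}\vec a\big)=\operatorname{rank}\mathcal W(\vec a)\quad\text{for every }\vec a\in\mathbb C^{I_1I_2}.$$ (a) If $\Psi'$ and $\Psi$ are SLOCC equivalent, then ( * ) holds. (b) If $I_1\neq I_2$ and ( * ) holds, then $\Psi'$ and $\Psi$ are SLOCC equivalent. (c) If $I_1=I_2$ and ( * ) holds, then $\Psi'$ is SLOCC equivalent either to $\Psi$ or to $\Psi^{\mathrm T}:=(\Gamma_1^{\mathrm T},\dots,\Gamma_r^{\mathrm T})$. The state $\Psi^{\mathrm T}$ is $\Psi$ with the second and third parties exchanged.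
   Context: **Tripartite states as tuples.** A tuple $(\Gamma_1,\dots,\Gamma_r)$ with $\Gamma_k\in\mathbb C^{I_1\times I_2}$ denotes the state $$\sum_k\sum_{i_1,i_2}(\Gamma_k)_{i_1i_2}|k\rangle|i_1\rangle|i_2\rangle.$$ **SLOCC equivalence.** Two such states are SLOCC equivalent if they are related by $P_0\otimes A_1\otimes A_2$ with $P_0,A_1,A_2$ invertible, i.e. $\Gamma'_k=\sum_l(P_0)_{kl}A_1\Gamma_lA_2^{\mathrm T}$. **Vectorization and folding.** $\mathcal V(\Gamma)$ is the column-stacking vectorization of $\Gamma\in\mathbb C^{I_1\times I_2}$, namely $(\Gamma_{11},\dots,\Gamma_{I_11},\Gamma_{12},\dots,\Gamma_{I_1I_2})^{\mathrm T}$. For $\vec a=(a_1,\dots,a_{I_1I_2})^{\mathrm T}$, the folding $\mathcal W(\vec a)\in\mathbb C^{I_1\times I_2}$ is the inverse operation, with $(p,q)$ entry $a_{(q-1)I_1+p}$. **Complementary state.** A complementary state of $(\Gamma_1,\dots,\Gamma_r)$ is any tuple $(\Gamma_{r+1},\dots,\Gamma_{I_1I_2})$ such that $\Gamma_1,\dots,\Gamma_{I_1I_2}$ form a basis of $\mathbb C^{I_1\times I_2}$. **The matrices $U,U'$.** Given complementary states, set $U=(\mathcal V(\Gamma_1),\dots,\mathcal V(\Gamma_{I_1I_2}))$ and $U'=(\mathcal V(\Gamma'_1),\dots,\mathcal V(\Gamma'_{I_1I_2}))$. *)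

theory Defs
  imports Complex_Main "Jordan_Normal_Form.DL_Rank" "Jordan_Normal_Form.Gauss_Jordan_Elimination"
begin

definition state_fmt :: "nat \<Rightarrow> nat \<Rightarrow> nat \<Rightarrow> complex mat list \<Rightarrow> bool" where
  "state_fmt r I1 I2 Gs \<longleftrightarrow> length Gs = r \<and> (\<forall>G\<in>set Gs. G \<in> carrier_mat I1 I2)"

definition lincomb_mats :: "nat \<Rightarrow> nat \<Rightarrow> (nat \<Rightarrow> complex) \<Rightarrow> complex mat list \<Rightarrow> complex mat" where
  "lincomb_mats I1 I2 c Gs = foldr (\<lambda>i acc. c i \<cdot>\<^sub>m (Gs ! i) + acc) [0..<length Gs] (0\<^sub>m I1 I2)"

definition lin_indep_mats :: "nat \<Rightarrow> nat \<Rightarrow> complex mat list \<Rightarrow> bool" where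
  "lin_indep_mats I1 I2 Gs \<longleftrightarrow>
     (\<forall>c. lincomb_mats I1 I2 c Gs = 0\<^sub>m I1 I2 \<longrightarrow> (\<forall>i<length Gs. c i = 0))"

definition basis_mats :: "nat \<Rightarrow> nat \<Rightarrow> complex mat list \<Rightarrow> bool" where
  "basis_mats I1 I2 Gs \<longleftrightarrow> (\<forall>G\<in>set Gs. G \<in> carrier_mat I1 I2) \<and>
     (\<forall>M\<in>carrier_mat I1 I2. \<exists>!c. c \<in> carrier_vec (length Gs) \<and>
         M = lincomb_mats I1 I2 (\<lambda>i. c $ i) Gs)"

definition complementary :: "nat \<Rightarrow> nat \<Rightarrow> complex mat list \<Rightarrow> complex mat list \<Rightarrow> bool" where
  "complementary I1 I2 Gs C \<longleftrightarrow> length C = I1 * I2 - length Gs \<and> basis_mats I1 I2 (Gs @ C)"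

text \<open>Column-stacking vectorization and folding (0-based: entry (p,q) sits at index q*I1+p).\<close>
definition vecz :: "nat \<Rightarrow> nat \<Rightarrow> complex mat \<Rightarrow> complex vec" where
  "vecz I1 I2 G = vec (I1 * I2) (\<lambda>i. G $$ (i mod I1, i div I1))"

definition foldv :: "nat \<Rightarrow> nat \<Rightarrow> complex vec \<Rightarrow> complex mat" where
  "foldv I1 I2 a = mat I1 I2 (\<lambda>(p, q). a $ (q * I1 + p))"

definition U_mat :: "nat \<Rightarrow> nat \<Rightarrow> complex mat list \<Rightarrow> complex mat" where
  "U_mat I1 I2 Gs = mat_of_cols (I1 * I2) (map (vecz I1 I2) Gs)"

definition mat_inv :: "complex mat \<Rightarrow> complex mat" where
  "mat_inv A = the (mat_inverse A)"

definition mrank :: "complex mat \<Rightarrow> nat" where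
  "mrank A = vec_space.rank (dim_row A) A"

definition cond_star :: "nat \<Rightarrow> nat \<Rightarrow> nat \<Rightarrow> complex mat \<Rightarrow> complex mat \<Rightarrow> bool" where
  "cond_star r I1 I2 U U' \<longleftrightarrow>
    (\<exists>P Pb Y. P \<in> carrier_mat r r \<and> invertible_mat P \<and>
       Pb \<in> carrier_mat (I1 * I2 - r) (I1 * I2 - r) \<and> invertible_mat Pb \<and>
       Y \<in> carrier_mat r (I1 * I2 - r) \<and>
       (let Pt = four_block_mat P Y (0\<^sub>m (I1 * I2 - r) r) Pb in
        \<forall>a\<in>carrier_vec (I1 * I2).
          mrank (foldv I1 I2 (U * Pt * mat_inv U' *\<^sub>v a)) = mrank (foldv I1 I2 a)))"

text \<open>SLOCC equivalence: Gs' = (P0 \<otimes> A1 \<otimes> A2) Gs.\<close>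
definition slocc_equiv :: "nat \<Rightarrow> nat \<Rightarrow> complex mat list \<Rightarrow> complex mat list \<Rightarrow> bool" where
  "slocc_equiv I1 I2 Gs' Gs \<longleftrightarrow> length Gs' = length Gs \<and>
    (\<exists>P0 A1 A2. P0 \<in> carrier_mat (length Gs) (length Gs) \<and> invertible_mat P0 \<and>
       A1 \<in> carrier_mat I1 I1 \<and> invertible_mat A1 \<and>
       A2 \<in> carrier_mat I2 I2 \<and> invertible_mat A2 \<and>
       (\<forall>k<length Gs. Gs' ! k =
          lincomb_mats I1 I2 (\<lambda>l. P0 $$ (k, l)) (map (\<lambda>G. A1 * G * transpose_mat A2) Gs)))"

end

theory Submission
  imports Defs "Jordan_Normal_Form.DL_Rank_Submatrix"
begin

text \<open>
  With \<open>\<Psi> @ C\<close> and \<open>\<Psi>' @ C'\<close> as bases, \<open>M = U Pt U'\<^sup>-\<^sup>1\<close> is, after vectorization, a linear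
  bijection of \<open>\<complex>\<^sup>I\<^sup>1\<^sup>\<times>\<^sup>I\<^sup>2\<close> with \<open>M \<Psi>'\<^sub>k = \<Sigma>\<^sub>l P\<^sub>l\<^sub>k \<Psi>\<^sub>l\<close>; the zero lower-left block of \<open>Pt\<close> says
  exactly that \<open>M\<close> maps the span of \<open>\<Psi>'\<close> onto the span of \<open>\<Psi>\<close>. A SLOCC equivalence
  \<open>\<Psi>'\<^sub>k = \<Sigma>\<^sub>l (P\<^sub>0)\<^sub>k\<^sub>l A\<^sub>1 \<Psi>\<^sub>l A\<^sub>2\<^sup>T\<close> provides such an \<open>M\<close>, namely \<open>X \<mapsto> A\<^sub>1\<^sup>-\<^sup>1 X A\<^sub>2\<^sup>-\<^sup>T\<close>, which
  preserves rank. Conversely a rank-preserving linear bijection preserves the matrices of rank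
  one, and such maps are \<open>X \<mapsto> A X B\<close> or, for square matrices only, \<open>X \<mapsto> A X\<^sup>T B\<close>
  (Marcus--Moyls): the images of the matrix units \<open>E\<^sub>i\<^sub>j\<close> have rank one, say \<open>x\<^sub>i\<^sub>j y\<^sub>i\<^sub>j\<^sup>T\<close>, and
  since \<open>E\<^sub>i\<^sub>j + E\<^sub>k\<^sub>l\<close> has rank one exactly when \<open>i = k\<close> or \<open>j = l\<close>, either all \<open>x\<^sub>i\<^sub>j\<close> in a row
  and all \<open>y\<^sub>i\<^sub>j\<close> in a column are parallel, or the other way round. Reading \<open>M \<Psi>'\<^sub>k = A \<Psi>'\<^sub>k B\<close>
  (resp. \<open>A \<Psi>'\<^sub>k\<^sup>T B\<close>) back gives the SLOCC equivalence with \<open>\<Psi>\<close> (resp. \<open>\<Psi>\<^sup>T\<close>).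
\<close>

section \<open>Invertible matrices\<close>

lemma invertible_mat_iff_inverse:
  assumes A: "A \<in> carrier_mat n n"
  shows "invertible_mat A \<longleftrightarrow> (\<exists>B\<in>carrier_mat n n. A * B = 1\<^sub>m n \<and> B * A = 1\<^sub>m n)"
proof
  assume "invertible_mat A"
  then obtain B where AB: "A * B = 1\<^sub>m n" and BA: "B * A = 1\<^sub>m (dim_row B)"
    using A unfolding invertible_mat_def inverts_mat_def by auto
  have "B \<in> carrier_mat n n"
    using AB BA A by (metis carrier_matD carrier_matI index_mult_mat(2,3) index_one_mat(2,3))
  with AB BA show "\<exists>B\<in>carrier_mat n n. A * B = 1\<^sub>m n \<and> B * A = 1\<^sub>m n" by auto
next
  assume "\<exists>B\<in>carrier_mat n n. A * B = 1\<^sub>m n \<and> B * A = 1\<^sub>m n"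
  then show "invertible_mat A"
    using A unfolding invertible_mat_def inverts_mat_def square_mat.simps by auto
qed

lemma invertible_mat_iff_det:
  fixes A :: "'a::field mat"
  assumes A: "A \<in> carrier_mat n n"
  shows "invertible_mat A \<longleftrightarrow> det A \<noteq> 0"
proof
  assume "invertible_mat A"
  then obtain B where "B \<in> carrier_mat n n" "A * B = 1\<^sub>m n"
    using invertible_mat_iff_inverse[OF A] by auto
  then have "det A * det B = 1" using det_mult[OF A] by (metis det_one)
  then show "det A \<noteq> 0" by auto
next
  assume "det A \<noteq> 0"
  from det_non_zero_imp_unit[OF A this, of "()"]
  obtain B where "B \<in> carrier_mat n n" "B * A = 1\<^sub>m n" "A * B = 1\<^sub>m n"
    unfolding Units_def by (auto simp: ring_mat_simps)
  then show "invertible_mat A" using invertible_mat_iff_inverse[OF A] by auto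
qed

lemma invertible_mat_iff_kernel:
  fixes A :: "'a::field mat"
  assumes A: "A \<in> carrier_mat n n"
  shows "invertible_mat A \<longleftrightarrow> (\<forall>v\<in>carrier_vec n. A *\<^sub>v v = 0\<^sub>v n \<longrightarrow> v = 0\<^sub>v n)"
  using invertible_mat_iff_det[OF A] det_0_iff_vec_prod_zero_field[OF A] by blast

lemma invertible_mat_mult:
  fixes A B :: "'a::field mat"
  assumes "A \<in> carrier_mat n n" "B \<in> carrier_mat n n" "invertible_mat A" "invertible_mat B"
  shows "invertible_mat (A * B)"
  using assms by (simp add: invertible_mat_iff_det[of _ n] det_mult)

lemma invertible_mat_transpose_iff:
  fixes A :: "'a::field mat"
  assumes "A \<in> carrier_mat n n"
  shows "invertible_mat A\<^sup>T \<longleftrightarrow> invertible_mat A"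
  using assms by (simp add: invertible_mat_iff_det[of _ n] det_transpose)

lemma mat_inv:
  assumes A: "A \<in> carrier_mat n n" and "invertible_mat A"
  shows "mat_inv A \<in> carrier_mat n n" "A * mat_inv A = 1\<^sub>m n" "mat_inv A * A = 1\<^sub>m n"
proof -
  have "det A \<noteq> 0" using assms invertible_mat_iff_det by blast
  from det_non_zero_imp_unit[OF A this] mat_inverse(1)[OF A]
  obtain B where "mat_inverse A = Some B" by fastforce
  with mat_inverse(2)[OF A]
  show "mat_inv A \<in> carrier_mat n n" "A * mat_inv A = 1\<^sub>m n" "mat_inv A * A = 1\<^sub>m n"
    unfolding mat_inv_def by auto
qed

lemma invertible_mat_inv:
  assumes "A \<in> carrier_mat n n" "invertible_mat A"
  shows "invertible_mat (mat_inv A)"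
  using mat_inv[OF assms] assms(1) invertible_mat_iff_inverse[of "mat_inv A" n] by auto

lemma invertible_mat_one [simp]: "invertible_mat (1\<^sub>m n :: 'a::field mat)"
  using invertible_mat_iff_det[of "1\<^sub>m n" n] by simp

lemma invertible_mat_inverse:
  assumes "A \<in> carrier_mat n n" "invertible_mat A"
  obtains A' where "A' \<in> carrier_mat n n" "invertible_mat A'" "A * A' = 1\<^sub>m n" "A' * A = 1\<^sub>m n"
proof -
  obtain A' where A': "A' \<in> carrier_mat n n" "A * A' = 1\<^sub>m n" "A' * A = 1\<^sub>m n"
    using assms invertible_mat_iff_inverse by blast
  moreover have "invertible_mat A'" using A' assms(1) invertible_mat_iff_inverse[OF A'(1)] by blast
  ultimately show thesis using that by blast
qed

lemma invertible_mat_mult_vec_cancel: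
  fixes A :: "'a::field mat"
  assumes A: "A \<in> carrier_mat n n" "invertible_mat A" and x: "x \<in> carrier_vec n" and y: "y \<in> carrier_vec n"
    and eq: "A *\<^sub>v x = A *\<^sub>v y"
  shows "x = y"
proof -
  obtain B where B: "B \<in> carrier_mat n n" "B * A = 1\<^sub>m n" using A invertible_mat_iff_inverse by blast
  have "x = (B * A) *\<^sub>v x" using B(2) x by simp
  also have "\<dots> = (B * A) *\<^sub>v y" using eq B(1) A(1) x y by (simp add: assoc_mult_mat_vec[of _ n n _ n])
  also have "\<dots> = y" using B(2) y by simp
  finally show ?thesis .
qed

lemma mult_inverses_cancel:
  fixes X :: "'a::semiring_1 mat"
  assumes A: "A \<in> carrier_mat m m" and A': "A' \<in> carrier_mat m m" and AA': "A' * A = 1\<^sub>m m"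
    and B: "B \<in> carrier_mat n n" and B': "B' \<in> carrier_mat n n" and BB': "B * B' = 1\<^sub>m n"
    and X: "X \<in> carrier_mat m n"
  shows "A' * (A * X * B) * B' = X"
proof -
  have AX: "A * X \<in> carrier_mat m n" using A X by simp
  have "A' * (A * X * B) = A' * (A * X) * B" using assoc_mult_mat[OF A' AX B] by simp
  also have "A' * (A * X) = A' * A * X" using assoc_mult_mat[OF A' A X] by simp
  also have "\<dots> = X" using AA' X by simp
  finally have "A' * (A * X * B) = X * B" .
  then have "A' * (A * X * B) * B' = X * B * B'" by simp
  also have "\<dots> = X * (B * B')" using assoc_mult_mat[OF X B B'] .
  also have "\<dots> = X" using BB' X by simp
  finally show ?thesis .
qed

lemma mult_mat3_index:
  assumes A: "A \<in> carrier_mat a b" and X: "X \<in> carrier_mat b c" and B: "B \<in> carrier_mat c d"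
    and pq: "p < a" "q < d"
  shows "(A * X * B) $$ (p,q) = (\<Sum>j<c. \<Sum>i<b. A $$ (p,i) * X $$ (i,j) * B $$ (j,q))"
proof -
  have "(A * X * B) $$ (p,q) = (\<Sum>j<c. (A * X) $$ (p,j) * B $$ (j,q))"
    using A X B pq by (simp add: scalar_prod_def atLeast0LessThan del: assoc_mult_mat)
  also have "\<dots> = (\<Sum>j<c. (\<Sum>i<b. A $$ (p,i) * X $$ (i,j)) * B $$ (j,q))"
    using A X pq by (intro sum.cong refl) (simp add: scalar_prod_def atLeast0LessThan)
  finally show ?thesis by (simp add: sum_distrib_right)
qed

text \<open>Otherwise padding \<open>A\<close> with zero rows gives a singular square matrix with the same kernel.\<close>

lemma injective_mat_dim_le:
  fixes A :: "'a::field mat"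
  assumes A: "A \<in> carrier_mat a b"
    and inj: "\<And>v. v \<in> carrier_vec b \<Longrightarrow> A *\<^sub>v v = 0\<^sub>v a \<Longrightarrow> v = 0\<^sub>v b"
  shows "b \<le> a"
proof (rule ccontr)
  assume "\<not> b \<le> a"
  then have ab: "a < b" by simp
  define A' where "A' = mat b b (\<lambda>(i,j). if i < a then A $$ (i,j) else 0)"
  have A'c: "A' \<in> carrier_mat b b" unfolding A'_def by simp
  have "A'\<^sup>T *\<^sub>v unit_vec b (b - 1) = 0\<^sub>v b"
  proof (rule eq_vecI)
    fix i assume "i < dim_vec (0\<^sub>v b :: 'a vec)"
    then have i: "i < b" by simp
    have "(A'\<^sup>T *\<^sub>v unit_vec b (b - 1)) $ i = row A'\<^sup>T i $ (b - 1)"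
      using i ab A'c by simp
    then show "(A'\<^sup>T *\<^sub>v unit_vec b (b - 1)) $ i = 0\<^sub>v b $ i"
      using i ab A'c unfolding A'_def by auto
  qed (use A'c in auto)
  moreover have "unit_vec b (b - 1) \<noteq> (0\<^sub>v b :: 'a vec)" using ab by simp
  ultimately have "det A'\<^sup>T = 0"
    using det_0_iff_vec_prod_zero_field[of "A'\<^sup>T" b] A'c
    by (metis transpose_carrier_mat unit_vec_carrier)
  then have "det A' = 0" using det_transpose[OF A'c] by simp
  then obtain v where v: "v \<in> carrier_vec b" "v \<noteq> 0\<^sub>v b" "A' *\<^sub>v v = 0\<^sub>v b"
    using det_0_iff_vec_prod_zero_field[OF A'c] by auto
  have "A *\<^sub>v v = 0\<^sub>v a"
  proof (rule eq_vecI)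
    fix i assume "i < dim_vec (0\<^sub>v a :: 'a vec)"
    then have i: "i < a" by simp
    have "row A' i = row A i" using i ab A unfolding A'_def by (intro eq_vecI) auto
    then have "(A *\<^sub>v v) $ i = (A' *\<^sub>v v) $ i" using i ab A A'c by simp
    then show "(A *\<^sub>v v) $ i = 0\<^sub>v a $ i" using v(3) i ab by simp
  qed (use A in auto)
  then show False using inj[OF v(1)] v(2) by simp
qed

section \<open>Rank\<close>

lemma (in vec_space) span_cols_mult:
  assumes A: "A \<in> carrier_mat n n" and X: "X \<in> carrier_mat n nc"
  shows "(\<lambda>v. A *\<^sub>v v) ` span (set (cols X)) = span (set (cols (A * X)))"
proof -
  have span_cols: "span (set (cols Y)) = (\<lambda>x. Y *\<^sub>v x) ` carrier_vec nc"
    if "Y \<in> carrier_mat n nc" for Y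
    using col_space_eq[OF that] that unfolding col_space_def by auto
  have "(\<lambda>v. A *\<^sub>v v) ` (\<lambda>x. X *\<^sub>v x) ` carrier_vec nc = (\<lambda>x. (A * X) *\<^sub>v x) ` carrier_vec nc"
    unfolding image_image using A X by (intro image_cong refl) (simp add: assoc_mult_mat_vec)
  then show ?thesis using span_cols[OF X] span_cols[of "A * X"] A X by simp
qed

lemma (in vec_space) linear_map_mult_mat_vec_span:
  assumes A: "A \<in> carrier_mat n n" and S: "S \<subseteq> carrier_vec n" and T: "T \<subseteq> carrier_vec n"
    and img: "(\<lambda>v. A *\<^sub>v v) ` span S = span T"
  shows "linear_map class_ring (span_vs S) (span_vs T) (\<lambda>v. A *\<^sub>v v)"
  unfolding linear_map_def mod_hom_def mod_hom_axioms_def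
proof (intro conjI)
  show VS: "vectorspace class_ring (span_vs S)" "vectorspace class_ring (span_vs T)"
    using span_is_subspace[THEN subspace_is_vs] S T by auto
  then show "Module.module class_ring (span_vs S)" "Module.module class_ring (span_vs T)"
    by (auto simp: vectorspace_def)
  have S_vec: "v \<in> carrier_vec n" if "v \<in> carrier (span_vs S)" for v
    using that span_closed[OF S] by simp
  show "(\<lambda>v. A *\<^sub>v v) \<in> LinearCombinations.module_hom class_ring (span_vs S) (span_vs T)"
    unfolding LinearCombinations.module_hom_def mem_Collect_eq
  proof (intro conjI allI impI)
    show "(\<lambda>v. A *\<^sub>v v) \<in> carrier (span_vs S) \<rightarrow> carrier (span_vs T)" using img by auto
    fix u v assume "u \<in> carrier (span_vs S) \<and> v \<in> carrier (span_vs S)"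
    then have "u \<in> carrier_vec n" "v \<in> carrier_vec n" using S_vec by auto
    then show "A *\<^sub>v (u \<oplus>\<^bsub>span_vs S\<^esub> v) = (A *\<^sub>v u) \<oplus>\<^bsub>span_vs T\<^esub> (A *\<^sub>v v)"
      by (simp add: mult_add_distrib_mat_vec[OF A])
  next
    fix c :: 'a and v assume "c \<in> carrier class_ring \<and> v \<in> carrier (span_vs S)"
    then have "v \<in> carrier_vec n" using S_vec by auto
    then show "A *\<^sub>v (c \<odot>\<^bsub>span_vs S\<^esub> v) = c \<odot>\<^bsub>span_vs T\<^esub> (A *\<^sub>v v)"
      by (simp add: mult_mat_vec[OF A])
  qed
qed

lemma (in vec_space) rank_mult_left_invertible:
  assumes A: "A \<in> carrier_mat n n" and Ai: "invertible_mat A" and X: "X \<in> carrier_mat n nc"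
  shows "rank (A * X) = rank X"
proof -
  have cols: "set (cols X) \<subseteq> carrier_vec n" "set (cols (A * X)) \<subseteq> carrier_vec n"
    using A X cols_dim[of X] cols_dim[of "A * X"] by auto
  have img: "(\<lambda>v. A *\<^sub>v v) ` carrier (span_vs (set (cols X))) = carrier (span_vs (set (cols (A * X))))"
    using span_cols_mult[OF A X] by simp
  have inj: "inj_on (\<lambda>v. A *\<^sub>v v) (carrier (span_vs (set (cols X))))"
  proof (rule inj_onI)
    fix u v assume "u \<in> carrier (span_vs (set (cols X)))" "v \<in> carrier (span_vs (set (cols X)))"
      and eq: "A *\<^sub>v u = A *\<^sub>v v"
    then have "u \<in> carrier_vec n" "v \<in> carrier_vec n" using span_closed[OF cols(1)] by auto
    then show "u = v" by (rule invertible_mat_mult_vec_cancel[OF A Ai _ _ eq])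
  qed
  have "vectorspace.dim class_ring (span_vs (set (cols X))) = vectorspace.dim class_ring (span_vs (set (cols (A * X))))"
    using linear_map.dim_eq[OF linear_map_mult_mat_vec_span[OF A cols span_cols_mult[OF A X]]
        fin_dim_span_cols[OF X] inj img] .
  then show ?thesis unfolding rank_def by simp
qed

lemma (in vec_space) rank_mult_right_invertible:
  assumes B: "B \<in> carrier_mat nc nc" and Bi: "invertible_mat B" and X: "X \<in> carrier_mat n nc"
  shows "rank (X * B) = rank X"
proof -
  have "row_space (B\<^sup>T * X\<^sup>T) = row_space X\<^sup>T"
    using B X Bi invertible_mat_transpose_iff[OF B] by (intro row_space_is_preserved) auto
  moreover have "B\<^sup>T * X\<^sup>T = (X * B)\<^sup>T" using B X by (simp add: transpose_mult)
  ultimately have "col_space (X * B) = col_space X"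
    unfolding col_space_eq_row_space_transpose by simp
  then show ?thesis unfolding rank_def col_space_def by simp
qed

lemma mrank_mult_invertible:
  fixes X :: "complex mat"
  assumes A: "A \<in> carrier_mat m m" "invertible_mat A" and B: "B \<in> carrier_mat n n" "invertible_mat B"
    and X: "X \<in> carrier_mat m n"
  shows "mrank (A * X * B) = mrank X"
  using A B X vec_space.rank_mult_right_invertible[OF B, of "A * X" m]
    vec_space.rank_mult_left_invertible[OF A X] unfolding mrank_def by simp

section \<open>Rank at most one\<close>

definition two_minors_vanish :: "'a::comm_ring mat \<Rightarrow> bool" where
  "two_minors_vanish X \<longleftrightarrow> (\<forall>p q s t. p < dim_row X \<longrightarrow> q < dim_row X \<longrightarrow>
      s < dim_col X \<longrightarrow> t < dim_col X \<longrightarrow> X $$ (p,s) * X $$ (q,t) = X $$ (p,t) * X $$ (q,s))"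

lemma two_minors_vanish_product:
  assumes "\<And>p s. p < dim_row X \<Longrightarrow> s < dim_col X \<Longrightarrow> X $$ (p,s) = f p * g s"
  shows "two_minors_vanish X"
  unfolding two_minors_vanish_def using assms by (simp add: algebra_simps)

lemma two_minors_vanish_transpose [simp]: "two_minors_vanish X\<^sup>T \<longleftrightarrow> two_minors_vanish X"
  unfolding two_minors_vanish_def by (auto simp: mult.commute)

lemma two_minors_vanish_imp_product:
  fixes X :: "'a::field mat"
  assumes "two_minors_vanish X"
  shows "\<exists>f g. \<forall>p s. p < dim_row X \<longrightarrow> s < dim_col X \<longrightarrow> X $$ (p,s) = f p * g s"
proof (cases "\<exists>p q. p < dim_row X \<and> q < dim_col X \<and> X $$ (p,q) \<noteq> 0")
  case True
  then obtain p0 q0 where pq: "p0 < dim_row X" "q0 < dim_col X" "X $$ (p0,q0) \<noteq> 0" by auto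
  show ?thesis
  proof (intro exI allI impI)
    fix p s assume ps: "p < dim_row X" "s < dim_col X"
    have "X $$ (p,s) * X $$ (p0,q0) = X $$ (p,q0) * X $$ (p0,s)"
      using assms ps pq unfolding two_minors_vanish_def by blast
    then show "X $$ (p,s) = X $$ (p,q0) * (X $$ (p0,s) / X $$ (p0,q0))"
      using pq(3) by (simp add: field_simps)
  qed
next
  case False
  then show ?thesis by (intro exI[of _ "\<lambda>_. 0"]) auto
qed

lemma det_dim_2:
  assumes A: "(A::'a::comm_ring_1 mat) \<in> carrier_mat 2 2"
  shows "det A = A $$ (0,0) * A $$ (1,1) - A $$ (0,1) * A $$ (1,0)"
proof -
  have "det A = A $$ (0,0) * cofactor A 0 0 + A $$ (1,0) * cofactor A 1 0"
    using laplace_expansion_column[OF A, of 0] by (simp add: numeral_2_eq_2)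
  also have "cofactor A 0 0 = A $$ (1,1)" unfolding cofactor_def
    using A by (subst det_single) (auto simp: mat_delete_def mat_delete_carrier)
  also have "cofactor A 1 0 = - A $$ (0,1)" unfolding cofactor_def
    using A by (subst det_single) (auto simp: mat_delete_def mat_delete_carrier)
  finally show ?thesis by simp
qed

lemma pick_doubleton:
  assumes "(p::nat) < q"
  shows "pick {p,q} 0 = p" "pick {p,q} 1 = q"
proof -
  have "{a \<in> {p,q}. a < p} = {}" using assms by auto
  then show "pick {p,q} 0 = p" using pick_card_in_set[of p "{p,q}"] by (metis card.empty insertI1)
  have "{a \<in> {p,q}. a < q} = {p}" using assms by auto
  then show "pick {p,q} 1 = q" using pick_card_in_set[of q "{p,q}"]
    by (metis One_nat_def card_1_singleton_iff insertI1 insert_commute)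
qed

lemma mrank_ge_2_of_minor:
  assumes X: "X \<in> carrier_mat m n" and pq: "p < q" "q < m" and st: "s < t" "t < n"
    and minor: "X $$ (p,s) * X $$ (q,t) - X $$ (p,t) * X $$ (q,s) \<noteq> 0"
  shows "2 \<le> mrank X"
proof -
  have rows: "{i. i < dim_row X \<and> i \<in> {p,q}} = {p,q}" using X pq by auto
  have cols: "{j. j < dim_col X \<and> j \<in> {s,t}} = {s,t}" using X st by auto
  have card: "card {p,q} = 2" "card {s,t} = 2" using pq st by auto
  let ?S = "submatrix X {p,q} {s,t}"
  have S: "?S \<in> carrier_mat 2 2" unfolding submatrix_def rows cols card by simp
  have S_index: "?S $$ (i,j) = X $$ (pick {p,q} i, pick {s,t} j)" if "i < 2" "j < 2" for i j
    using submatrix_index[of i X "{p,q}" j "{s,t}"] that unfolding rows cols card by simp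
  have "det ?S \<noteq> 0"
    unfolding det_dim_2[OF S] using S_index[of 0 0] S_index[of 0 1] S_index[of 1 0] S_index[of 1 1]
      pick_doubleton[OF pq(1)] pick_doubleton[OF st(1)] minor by simp
  from vec_space.rank_gt_minor[OF X this]
  show ?thesis unfolding mrank_def using X card cols by auto
qed

lemma mrank_le_1_iff:
  assumes X: "X \<in> carrier_mat m n"
  shows "mrank X \<le> 1 \<longleftrightarrow> two_minors_vanish X"
proof
  assume "two_minors_vanish X"
  from two_minors_vanish_imp_product[OF this] obtain f g
    where "\<And>p s. p < dim_row X \<Longrightarrow> s < dim_col X \<Longrightarrow> X $$ (p,s) = f p * g s" by blast
  then show "mrank X \<le> 1" unfolding mrank_def using vec_space.rank_le_1_product_entries[OF X] X by auto
next
  assume rk: "mrank X \<le> 1"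
  show "two_minors_vanish X" unfolding two_minors_vanish_def
  proof (intro allI impI, rule ccontr)
    fix p q s t assume b: "p < dim_row X" "q < dim_row X" "s < dim_col X" "t < dim_col X"
      and ne: "X $$ (p,s) * X $$ (q,t) \<noteq> X $$ (p,t) * X $$ (q,s)"
    have "p \<noteq> q" "s \<noteq> t" using ne by (auto simp: mult.commute)
    define p' q' s' t' where "p' = min p q" "q' = max p q" "s' = min s t" "t' = max s t"
    note defs = this
    have "X $$ (p',s') * X $$ (q',t') - X $$ (p',t') * X $$ (q',s') \<noteq> 0"
      using ne unfolding defs by (cases "p < q"; cases "s < t") (auto simp: min_def max_def algebra_simps)
    from mrank_ge_2_of_minor[OF X _ _ _ _ this] have "2 \<le> mrank X"
      using b \<open>p \<noteq> q\<close> \<open>s \<noteq> t\<close> X by (auto simp: defs)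
    with rk show False by simp
  qed
qed

section \<open>Outer products and parallel vectors\<close>

definition outer_mat :: "'a::times vec \<Rightarrow> 'a vec \<Rightarrow> 'a mat" where
  "outer_mat x y = mat (dim_vec x) (dim_vec y) (\<lambda>(p,q). x $ p * y $ q)"

definition elem_mat :: "nat \<Rightarrow> nat \<Rightarrow> nat \<Rightarrow> nat \<Rightarrow> 'a::zero_neq_one mat" where
  "elem_mat m n i j = mat m n (\<lambda>(p,q). if p = i \<and> q = j then 1 else 0)"

text \<open>All \<open>2 \<times> 2\<close> minors of the matrix with columns \<open>u\<close> and \<open>v\<close> vanish; for \<open>u \<noteq> 0\<close> this
  says \<open>v \<in> K u\<close>.\<close>

definition parallel_vec :: "'a::times vec \<Rightarrow> 'a vec \<Rightarrow> bool" where
  "parallel_vec u v \<longleftrightarrow>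
    (\<forall>p q. p < dim_vec u \<longrightarrow> q < dim_vec u \<longrightarrow> u $ p * v $ q = u $ q * v $ p)"

lemma outer_mat_carrier [simp]: "outer_mat x y \<in> carrier_mat (dim_vec x) (dim_vec y)"
  and outer_mat_dim [simp]: "dim_row (outer_mat x y) = dim_vec x" "dim_col (outer_mat x y) = dim_vec y"
  unfolding outer_mat_def by simp_all

lemma outer_mat_index [simp]:
  "p < dim_vec x \<Longrightarrow> q < dim_vec y \<Longrightarrow> outer_mat x y $$ (p,q) = x $ p * y $ q"
  unfolding outer_mat_def by simp

lemma transpose_outer_mat: "(outer_mat x y)\<^sup>T = outer_mat y (x :: 'a::comm_ring vec)"
  by (rule eq_matI) (auto simp: mult.commute)

lemma outer_mat_smult:
  "outer_mat (a \<cdot>\<^sub>v u) (b \<cdot>\<^sub>v v) = (a * b) \<cdot>\<^sub>m outer_mat u (v :: 'a::comm_ring vec)"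
  by (rule eq_matI) (auto simp: ac_simps)

lemma outer_mat_zero_left: "outer_mat (0\<^sub>v a) v = (0\<^sub>m a (dim_vec v) :: 'a::ring mat)"
  and outer_mat_zero_right: "outer_mat u (0\<^sub>v b) = (0\<^sub>m (dim_vec u) b :: 'a::ring mat)"
  by (intro eq_matI; simp)+

lemma mult_outer_mat:
  assumes A: "A \<in> carrier_mat a k" and u: "u \<in> carrier_vec k"
  shows "A * outer_mat u v = outer_mat (A *\<^sub>v u) (v :: 'a::comm_ring vec)"
proof (rule eq_matI)
  fix i j assume "i < dim_row (outer_mat (A *\<^sub>v u) v)" "j < dim_col (outer_mat (A *\<^sub>v u) v)"
  then have ij: "i < a" "j < dim_vec v" using A by auto
  have "(A * outer_mat u v) $$ (i,j) = (\<Sum>l\<in>{0..<k}. A $$ (i,l) * (u $ l * v $ j))"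
    using ij A u by (simp add: scalar_prod_def)
  also have "\<dots> = (\<Sum>l\<in>{0..<k}. A $$ (i,l) * u $ l) * v $ j"
    by (simp add: sum_distrib_right mult.assoc)
  finally show "(A * outer_mat u v) $$ (i,j) = outer_mat (A *\<^sub>v u) v $$ (i,j)"
    using ij A u by (simp add: scalar_prod_def)
qed (use A u in auto)

lemma outer_mat_mult:
  assumes B: "B \<in> carrier_mat k b" and v: "v \<in> carrier_vec k"
  shows "outer_mat u v * B = outer_mat u (B\<^sup>T *\<^sub>v (v :: 'a::comm_ring vec))"
proof (rule eq_matI)
  fix i j assume "i < dim_row (outer_mat u (B\<^sup>T *\<^sub>v v))" "j < dim_col (outer_mat u (B\<^sup>T *\<^sub>v v))"
  then have ij: "i < dim_vec u" "j < b" using B by auto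
  have "(outer_mat u v * B) $$ (i,j) = (\<Sum>l\<in>{0..<k}. u $ i * v $ l * B $$ (l,j))"
    using ij B v by (simp add: scalar_prod_def)
  also have "\<dots> = u $ i * (\<Sum>l\<in>{0..<k}. B $$ (l,j) * v $ l)"
    by (simp add: sum_distrib_left algebra_simps)
  finally show "(outer_mat u v * B) $$ (i,j) = outer_mat u (B\<^sup>T *\<^sub>v v) $$ (i,j)"
    using ij B v by (simp add: scalar_prod_def)
qed (use B v in auto)

lemma outer_mat_unit_vec_left_eq_0:
  fixes v :: "'a::ring_1 vec"
  assumes "outer_mat (unit_vec a 0) v = 0\<^sub>m a b" "0 < a" "v \<in> carrier_vec b"
  shows "v = 0\<^sub>v b"
proof (rule eq_vecI)
  fix q assume "q < dim_vec (0\<^sub>v b :: 'a vec)"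
  then have q: "q < b" by simp
  have "outer_mat (unit_vec a 0) v $$ (0,q) = 0" unfolding assms(1) using assms q by simp
  moreover have "outer_mat (unit_vec a 0) v $$ (0,q) = v $ q"
    using assms(2) q carrier_vecD[OF assms(3)] by simp
  ultimately show "v $ q = 0\<^sub>v b $ q" using q by simp
qed (use assms in auto)

lemma outer_mat_unit_vec_right_eq_0:
  fixes u :: "'a::ring_1 vec"
  assumes "outer_mat u (unit_vec b 0) = 0\<^sub>m a b" "0 < b" "u \<in> carrier_vec a"
  shows "u = 0\<^sub>v a"
proof (rule eq_vecI)
  fix p assume "p < dim_vec (0\<^sub>v a :: 'a vec)"
  then have p: "p < a" by simp
  have "outer_mat u (unit_vec b 0) $$ (p,0) = 0" unfolding assms(1) using assms p by simp
  moreover have "outer_mat u (unit_vec b 0) $$ (p,0) = u $ p"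
    using assms(2) p carrier_vecD[OF assms(3)] by simp
  ultimately show "u $ p = 0\<^sub>v a $ p" using p by simp
qed (use assms in auto)

lemma elem_mat_carrier [simp]: "elem_mat m n i j \<in> carrier_mat m n"
  and elem_mat_dim [simp]: "dim_row (elem_mat m n i j) = m" "dim_col (elem_mat m n i j) = n"
  unfolding elem_mat_def by simp_all

lemma elem_mat_index [simp]:
  "p < m \<Longrightarrow> q < n \<Longrightarrow> elem_mat m n i j $$ (p,q) = (if p = i \<and> q = j then 1 else 0)"
  unfolding elem_mat_def by simp

lemma two_minors_vanish_elem_mat: "two_minors_vanish (elem_mat m n i j :: 'a::comm_ring_1 mat)"
  by (rule two_minors_vanish_product[of _ "\<lambda>p. if p = i then 1 else 0" "\<lambda>q. if q = j then 1 else 0"]) auto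

lemma two_minors_vanish_imp_outer_mat:
  fixes X :: "'a::field mat"
  assumes X: "X \<in> carrier_mat m n" and r: "two_minors_vanish X" and nz: "X \<noteq> 0\<^sub>m m n"
  shows "\<exists>x y. X = outer_mat x y \<and> x \<in> carrier_vec m \<and> y \<in> carrier_vec n \<and>
    x \<noteq> 0\<^sub>v m \<and> y \<noteq> 0\<^sub>v n"
proof -
  obtain p0 q0 where pq: "p0 < m" "q0 < n" "X $$ (p0,q0) \<noteq> 0"
    using nz X by (metis carrier_matD eq_matI index_zero_mat)
  define x where "x = vec m (\<lambda>p. X $$ (p,q0))"
  define y where "y = vec n (\<lambda>q. X $$ (p0,q) / X $$ (p0,q0))"
  have "X = outer_mat x y"
  proof (rule eq_matI)
    fix p q assume "p < dim_row (outer_mat x y)" "q < dim_col (outer_mat x y)"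
    then have pq': "p < m" "q < n" by (auto simp: x_def y_def)
    have "X $$ (p,q) * X $$ (p0,q0) = X $$ (p,q0) * X $$ (p0,q)"
      using r pq' pq X unfolding two_minors_vanish_def by auto
    then show "X $$ (p,q) = outer_mat x y $$ (p,q)"
      using pq' pq by (simp add: x_def y_def field_simps)
  qed (use X in \<open>auto simp: x_def y_def\<close>)
  moreover have "x \<noteq> 0\<^sub>v m" "y \<noteq> 0\<^sub>v n" using pq unfolding x_def y_def
    by (metis index_vec index_zero_vec(1), metis divide_eq_0_iff index_vec index_zero_vec(1))
  moreover have "x \<in> carrier_vec m" "y \<in> carrier_vec n" by (simp_all add: x_def y_def)
  ultimately show ?thesis by blast
qed

lemma parallel_vec_refl: "parallel_vec u (u :: 'a::comm_ring vec)"
  unfolding parallel_vec_def by (simp add: mult.commute)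

lemma parallel_vec_sym:
  "dim_vec u = dim_vec v \<Longrightarrow> parallel_vec u v \<Longrightarrow> parallel_vec v (u :: 'a::comm_ring vec)"
  unfolding parallel_vec_def by (metis mult.commute)

lemma parallel_vec_iff_smult:
  fixes u v :: "'a::field vec"
  assumes u: "u \<in> carrier_vec k" and v: "v \<in> carrier_vec k" and nz: "u \<noteq> 0\<^sub>v k"
  shows "parallel_vec u v \<longleftrightarrow> (\<exists>c. v = c \<cdot>\<^sub>v u)"
proof
  assume pv: "parallel_vec u v"
  obtain p0 where p0: "p0 < k" "u $ p0 \<noteq> 0"
    using nz u by (metis carrier_vecD eq_vecI index_zero_vec)
  show "\<exists>c. v = c \<cdot>\<^sub>v u"
  proof (intro exI eq_vecI)
    fix q assume "q < dim_vec (v $ p0 / u $ p0 \<cdot>\<^sub>v u)"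
    then have q: "q < k" using u by simp
    have "u $ p0 * v $ q = u $ q * v $ p0" using pv p0 q u unfolding parallel_vec_def by auto
    then show "v $ q = (v $ p0 / u $ p0 \<cdot>\<^sub>v u) $ q" using p0 q u by (simp add: field_simps)
  qed (use u v in auto)
next
  assume "\<exists>c. v = c \<cdot>\<^sub>v u"
  then show "parallel_vec u v" unfolding parallel_vec_def by (auto simp: algebra_simps)
qed

lemma parallel_vec_trans:
  fixes u v w :: "'a::field vec"
  assumes u: "u \<in> carrier_vec k" and v: "v \<in> carrier_vec k" and w: "w \<in> carrier_vec k"
    and nz: "v \<noteq> 0\<^sub>v k" and uv: "parallel_vec u v" and vw: "parallel_vec v w"
  shows "parallel_vec u w"
proof -
  obtain a where a: "u = a \<cdot>\<^sub>v v"
    using parallel_vec_iff_smult[OF v u nz] parallel_vec_sym[OF _ uv] u v by auto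
  obtain b where b: "w = b \<cdot>\<^sub>v v" using parallel_vec_iff_smult[OF v w nz] vw by auto
  show ?thesis unfolding parallel_vec_def a b by (simp add: algebra_simps)
qed

text \<open>If the entries of \<open>X\<close> are given by \<open>c\<^sub>1 a b\<^sup>T + c\<^sub>2 a b'\<^sup>T + c\<^sub>3 a' b\<^sup>T + c\<^sub>4 a' b'\<^sup>T\<close> with
  \<open>a, a'\<close> and \<open>b, b'\<close> independent, the \<open>2 \<times> 2\<close> minors of \<open>X\<close> are multiples of \<open>c\<^sub>1 c\<^sub>4 - c\<^sub>2 c\<^sub>3\<close>.\<close>

lemma two_minors_vanish_combination:
  fixes X :: "'a::field mat"
  assumes X: "X \<in> carrier_mat m n"
    and a: "a \<in> carrier_vec m" "a' \<in> carrier_vec m" and b: "b \<in> carrier_vec n" "b' \<in> carrier_vec n"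
    and npa: "\<not> parallel_vec a a'" and npb: "\<not> parallel_vec b b'"
    and X_index: "\<And>p s. p < m \<Longrightarrow> s < n \<Longrightarrow> X $$ (p,s) =
        c1 * a $ p * b $ s + c2 * a $ p * b' $ s + c3 * a' $ p * b $ s + c4 * a' $ p * b' $ s"
    and r: "two_minors_vanish X"
  shows "c1 * c4 = c2 * c3"
proof -
  obtain p q where pq: "p < m" "q < m" "a $ p * a' $ q - a $ q * a' $ p \<noteq> 0"
    using npa a unfolding parallel_vec_def by auto
  obtain s t where st: "s < n" "t < n" "b $ s * b' $ t - b $ t * b' $ s \<noteq> 0"
    using npb b unfolding parallel_vec_def by auto
  have "X $$ (p,s) * X $$ (q,t) = X $$ (p,t) * X $$ (q,s)"
    using r pq st X unfolding two_minors_vanish_def by auto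
  then have "(a $ p * a' $ q - a $ q * a' $ p) * (b $ s * b' $ t - b $ t * b' $ s) * (c1 * c4 - c2 * c3) = 0"
    unfolding X_index[OF pq(1) st(1)] X_index[OF pq(2) st(2)] X_index[OF pq(1) st(2)] X_index[OF pq(2) st(1)]
    by (simp add: algebra_simps)
  then show ?thesis using pq st by simp
qed

section \<open>Linear maps preserving rank one\<close>

locale rank_one_preserver =
  fixes t :: "'a::field mat \<Rightarrow> 'a mat" and m n m' n' :: nat
  assumes t_carrier: "X \<in> carrier_mat m n \<Longrightarrow> t X \<in> carrier_mat m' n'"
    and t_add: "X \<in> carrier_mat m n \<Longrightarrow> Y \<in> carrier_mat m n \<Longrightarrow> t (X + Y) = t X + t Y"
    and t_smult: "X \<in> carrier_mat m n \<Longrightarrow> t (c \<cdot>\<^sub>m X) = c \<cdot>\<^sub>m t X"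
    and t_eq_0: "X \<in> carrier_mat m n \<Longrightarrow> t X = 0\<^sub>m m' n' \<Longrightarrow> X = 0\<^sub>m m n"
    and t_two_minors: "X \<in> carrier_mat m n \<Longrightarrow> two_minors_vanish (t X) \<longleftrightarrow> two_minors_vanish X"

lemma (in rank_one_preserver) rank_one_preserver_transpose:
  "rank_one_preserver (\<lambda>X. (t X)\<^sup>T) m n n' m'"
proof (unfold_locales)
  fix X :: "'a mat" assume X: "X \<in> carrier_mat m n"
  show "(t X)\<^sup>T \<in> carrier_mat n' m'" using t_carrier[OF X] by simp
  show "(t (c \<cdot>\<^sub>m X))\<^sup>T = c \<cdot>\<^sub>m (t X)\<^sup>T" for c using t_smult[OF X] by (intro eq_matI) auto
  show "two_minors_vanish (t X)\<^sup>T \<longleftrightarrow> two_minors_vanish X" using t_two_minors[OF X] by simp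
  show "X = 0\<^sub>m m n" if "(t X)\<^sup>T = 0\<^sub>m n' m'"
  proof -
    have "t X = ((t X)\<^sup>T)\<^sup>T" by simp
    also have "\<dots> = 0\<^sub>m m' n'" unfolding that by (intro eq_matI) auto
    finally show ?thesis using t_eq_0[OF X] by simp
  qed
  fix Y :: "'a mat" assume Y: "Y \<in> carrier_mat m n"
  show "(t (X + Y))\<^sup>T = (t X)\<^sup>T + (t Y)\<^sup>T"
    using t_add[OF X Y] transpose_add[OF t_carrier[OF X] t_carrier[OF Y]] by simp
qed

definition outer_on_elem_mats :: "('a::field mat \<Rightarrow> 'a mat) \<Rightarrow> nat \<Rightarrow> nat \<Rightarrow> nat \<Rightarrow> nat \<Rightarrow> bool" where
  "outer_on_elem_mats t m n m' n' \<longleftrightarrow> (\<exists>\<alpha> \<beta>.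
     (\<forall>i<m. \<alpha> i \<in> carrier_vec m') \<and> (\<forall>j<n. \<beta> j \<in> carrier_vec n') \<and>
     (\<forall>i<m. \<forall>j<n. t (elem_mat m n i j) = outer_mat (\<alpha> i) (\<beta> j)))"

locale rank_one_preserver_factors = rank_one_preserver +
  fixes x y :: "nat \<Rightarrow> nat \<Rightarrow> 'a::field vec"
  assumes t_elem_mat: "i < m \<Longrightarrow> j < n \<Longrightarrow> t (elem_mat m n i j) = outer_mat (x i j) (y i j)"
    and x_carrier: "i < m \<Longrightarrow> j < n \<Longrightarrow> x i j \<in> carrier_vec m'"
    and y_carrier: "i < m \<Longrightarrow> j < n \<Longrightarrow> y i j \<in> carrier_vec n'"
    and x_nonzero: "i < m \<Longrightarrow> j < n \<Longrightarrow> x i j \<noteq> 0\<^sub>v m'"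
    and y_nonzero: "i < m \<Longrightarrow> j < n \<Longrightarrow> y i j \<noteq> 0\<^sub>v n'"
begin

lemma t_elem_mat_add_index:
  assumes "i < m" "j < n" "k < m" "l < n" "p < m'" "s < n'"
  shows "t (elem_mat m n i j + elem_mat m n k l) $$ (p,s) = x i j $ p * y i j $ s + x k l $ p * y k l $ s"
  using assms t_add[of "elem_mat m n i j" "elem_mat m n k l"] t_elem_mat
    x_carrier[of i j] x_carrier[of k l] y_carrier[of i j] y_carrier[of k l] by simp

lemma parallel_x_or_y_of_aligned:
  assumes ij: "i < m" "j < n" and kl: "k < m" "l < n" and aligned: "i = k \<or> j = l"
  shows "parallel_vec (x i j) (x k l) \<or> parallel_vec (y i j) (y k l)"
proof (rule ccontr)
  let ?X = "elem_mat m n i j + elem_mat m n k l :: 'a mat"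
  have X: "?X \<in> carrier_mat m n" by simp
  have "two_minors_vanish ?X"
  proof (cases "i = k")
    case True
    show ?thesis
      by (rule two_minors_vanish_product[of _ "\<lambda>p. if p = i then 1 else 0"
            "\<lambda>q. (if q = j then 1 else 0) + (if q = l then 1 else 0)"]) (use True in auto)
  next
    case False
    with aligned show ?thesis
      by (intro two_minors_vanish_product[of _ "\<lambda>p. (if p = i then 1 else 0) + (if p = k then 1 else 0)"
            "\<lambda>q. if q = j then 1 else 0"]) auto
  qed
  then have "two_minors_vanish (t ?X)" using t_two_minors[OF X] by simp
  moreover assume "\<not> (parallel_vec (x i j) (x k l) \<or> parallel_vec (y i j) (y k l))"
  ultimately have "1 * 1 = (0::'a) * 0"
    by (intro two_minors_vanish_combination[OF t_carrier[OF X] x_carrier[OF ij] x_carrier[OF kl]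
          y_carrier[OF ij] y_carrier[OF kl]]) (auto simp: t_elem_mat_add_index ij kl)
  then show False by simp
qed

lemma not_two_minors_vanish_elem_mat_add:
  assumes "i < m" "j < n" "k < m" "l < n" "i \<noteq> k" "j \<noteq> l"
  shows "\<not> two_minors_vanish (elem_mat m n i j + elem_mat m n k l :: 'a mat)"
proof
  assume "two_minors_vanish (elem_mat m n i j + elem_mat m n k l :: 'a mat)"
  from this[unfolded two_minors_vanish_def, rule_format, of i k j l] assms show False by simp
qed

lemma not_parallel_of_skew:
  assumes ij: "i < m" "j < n" and kl: "k < m" "l < n" and skew: "i \<noteq> k" "j \<noteq> l"
  shows "\<not> parallel_vec (x i j) (x k l)" "\<not> parallel_vec (y i j) (y k l)"
proof -
  let ?X = "elem_mat m n i j + elem_mat m n k l :: 'a mat"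
  have X: "?X \<in> carrier_mat m n" by simp
  have not_rk1: "\<not> two_minors_vanish (t ?X)"
    using t_two_minors[OF X] not_two_minors_vanish_elem_mat_add[OF ij kl skew] by simp
  note dims = t_carrier[OF X] carrier_vecD[OF x_carrier[OF ij]] carrier_vecD[OF x_carrier[OF kl]]
    carrier_vecD[OF y_carrier[OF ij]] carrier_vecD[OF y_carrier[OF kl]]
  show "\<not> parallel_vec (x i j) (x k l)"
  proof
    assume "parallel_vec (x i j) (x k l)"
    then obtain a where a: "x k l = a \<cdot>\<^sub>v x i j"
      using parallel_vec_iff_smult[OF x_carrier[OF ij] x_carrier[OF kl] x_nonzero[OF ij]] by auto
    have "two_minors_vanish (t ?X)"
      by (rule two_minors_vanish_product[of _ "\<lambda>p. x i j $ p" "\<lambda>s. y i j $ s + a * y k l $ s"])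
        (use dims ij kl in \<open>auto simp: t_elem_mat_add_index a algebra_simps\<close>)
    with not_rk1 show False by simp
  qed
  show "\<not> parallel_vec (y i j) (y k l)"
  proof
    assume "parallel_vec (y i j) (y k l)"
    then obtain a where a: "y k l = a \<cdot>\<^sub>v y i j"
      using parallel_vec_iff_smult[OF y_carrier[OF ij] y_carrier[OF kl] y_nonzero[OF ij]] by auto
    have "two_minors_vanish (t ?X)"
      by (rule two_minors_vanish_product[of _ "\<lambda>p. x i j $ p + a * x k l $ p" "\<lambda>s. y i j $ s"])
        (use dims ij kl in \<open>auto simp: t_elem_mat_add_index a algebra_simps\<close>)
    with not_rk1 show False by simp
  qed
qed

lemma parallel_x_sym:
  "i < m \<Longrightarrow> j < n \<Longrightarrow> k < m \<Longrightarrow> l < n \<Longrightarrow>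
    parallel_vec (x i j) (x k l) \<longleftrightarrow> parallel_vec (x k l) (x i j)"
  using parallel_vec_sym carrier_vecD[OF x_carrier] by metis

lemma parallel_y_sym:
  "i < m \<Longrightarrow> j < n \<Longrightarrow> k < m \<Longrightarrow> l < n \<Longrightarrow>
    parallel_vec (y i j) (y k l) \<longleftrightarrow> parallel_vec (y k l) (y i j)"
  using parallel_vec_sym carrier_vecD[OF y_carrier] by metis

lemma parallel_x_trans:
  assumes "i < m" "j < n" "k < m" "l < n" "a < m" "b < n"
    and "parallel_vec (x i j) (x k l)" "parallel_vec (x k l) (x a b)"
  shows "parallel_vec (x i j) (x a b)"
  using parallel_vec_trans[OF x_carrier x_carrier x_carrier x_nonzero] assms by blast

lemma parallel_y_trans:
  assumes "i < m" "j < n" "k < m" "l < n" "a < m" "b < n"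
    and "parallel_vec (y i j) (y k l)" "parallel_vec (y k l) (y a b)"
  shows "parallel_vec (y i j) (y a b)"
  using parallel_vec_trans[OF y_carrier y_carrier y_carrier y_nonzero] assms by blast

lemma row_parallel_iff_not_col_parallel:
  assumes "i < m" "k < m" "j < n" "l < n" "i \<noteq> k" "j \<noteq> l"
  shows "parallel_vec (x i j) (x i l) \<longleftrightarrow> \<not> parallel_vec (x i j) (x k j)"
proof
  assume "parallel_vec (x i j) (x i l)"
  then have H: "parallel_vec (x i l) (x i j)" using parallel_x_sym assms by blast
  show "\<not> parallel_vec (x i j) (x k j)"
  proof
    assume "parallel_vec (x i j) (x k j)"
    with H have "parallel_vec (x i l) (x k j)" using parallel_x_trans assms by blast
    then show False using not_parallel_of_skew(1)[of i l k j] assms by auto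
  qed
next
  assume nV: "\<not> parallel_vec (x i j) (x k j)"
  show "parallel_vec (x i j) (x i l)"
  proof (rule ccontr)
    assume "\<not> parallel_vec (x i j) (x i l)"
    then have "parallel_vec (y i l) (y i j)"
      using parallel_x_or_y_of_aligned[of i j i l] parallel_y_sym assms by auto
    moreover have "parallel_vec (y i j) (y k j)" using parallel_x_or_y_of_aligned[of i j k j] nV assms by auto
    ultimately have "parallel_vec (y i l) (y k j)" using parallel_y_trans assms by blast
    then show False using not_parallel_of_skew(2)[of i l k j] assms by auto
  qed
qed

lemma row_parallel_transfer:
  assumes "i < m" "k < m" "j < n" "l < n" "l' < n" "i \<noteq> k" "j \<noteq> l" "j \<noteq> l'"
  shows "parallel_vec (x i j) (x i l) \<longleftrightarrow> parallel_vec (x k j) (x k l')"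
  using row_parallel_iff_not_col_parallel[of i k j l] row_parallel_iff_not_col_parallel[of k i j l']
    parallel_x_sym[of i j k j] assms by auto

lemma row_parallel_row_indep:
  assumes "i < m" "i' < m" "j < n" "l < n" "j \<noteq> l"
  shows "parallel_vec (x i j) (x i l) \<longleftrightarrow> parallel_vec (x i' j) (x i' l)"
  using row_parallel_transfer[of i i' j l l] assms by (cases "i = i'") auto

lemma row_parallel_col_indep:
  assumes m2: "2 \<le> m" and "i < m" "j < n" "l < n" "l' < n" "j \<noteq> l" "j \<noteq> l'"
  shows "parallel_vec (x i j) (x i l) \<longleftrightarrow> parallel_vec (x i j) (x i l')"
proof -
  define k where "k = (if i = 0 then 1 else 0::nat)"
  have k: "k < m" "k \<noteq> i" using m2 unfolding k_def by auto
  show ?thesis using row_parallel_transfer[of i k j l l'] row_parallel_transfer[of k i j l' l'] assms k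
    by auto
qed

lemma row_parallel_iff_corner:
  assumes m2: "2 \<le> m" and n2: "2 \<le> n" and i: "i < m" and jl: "j < n" "l < n" "j \<noteq> l"
  shows "parallel_vec (x i j) (x i l) \<longleftrightarrow> parallel_vec (x 0 0) (x 0 1)"
proof -
  have "parallel_vec (x i j) (x i l) \<longleftrightarrow> parallel_vec (x i 0) (x i 1)"
  proof (cases "j = 0")
    case True
    then show ?thesis using row_parallel_col_indep[of i 0 l 1] assms by auto
  next
    case False
    have "parallel_vec (x i j) (x i l) \<longleftrightarrow> parallel_vec (x i j) (x i 0)"
      using row_parallel_col_indep[of i j l 0] assms False by (cases "l = 0") auto
    also have "\<dots> \<longleftrightarrow> parallel_vec (x i 0) (x i j)" using parallel_x_sym assms by auto
    also have "\<dots> \<longleftrightarrow> parallel_vec (x i 0) (x i 1)"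
      using row_parallel_col_indep[of i 0 j 1] assms False by auto
    finally show ?thesis .
  qed
  also have "\<dots> \<longleftrightarrow> parallel_vec (x 0 0) (x 0 1)" using row_parallel_row_indep[of i 0 0 1] assms by auto
  finally show ?thesis .
qed

lemma row_parallel_of_corner:
  assumes "2 \<le> m" "2 \<le> n" "parallel_vec (x 0 0) (x 0 1)" "i < m" "j < n" "l < n"
  shows "parallel_vec (x i j) (x i l)"
  using row_parallel_iff_corner[of i j l] parallel_vec_refl assms by (cases "j = l") auto

lemma col_parallel_y_of_corner:
  assumes m2: "2 \<le> m" and n2: "2 \<le> n" and corner: "parallel_vec (x 0 0) (x 0 1)"
    and "i < m" "k < m" "j < n"
  shows "parallel_vec (y i j) (y k j)"
proof (cases "i = k")
  case True
  then show ?thesis using parallel_vec_refl by simp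
next
  case False
  define l where "l = (if j = 0 then 1 else 0::nat)"
  have l: "l < n" "l \<noteq> j" using n2 unfolding l_def by auto
  have "\<not> parallel_vec (x i j) (x k j)"
    using row_parallel_iff_not_col_parallel[of i k j l] row_parallel_of_corner[OF m2 n2 corner, of i j l]
      assms l False by auto
  then show ?thesis using parallel_x_or_y_of_aligned[of i j k j] assms by auto
qed


lemma elem_images_scaled_of_corner:
  assumes m2: "2 \<le> m" and n2: "2 \<le> n" and corner: "parallel_vec (x 0 0) (x 0 1)"
  obtains c where "\<And>i j. i < m \<Longrightarrow> j < n \<Longrightarrow> c i j \<noteq> 0"
    and "\<And>i j. i < m \<Longrightarrow> j < n \<Longrightarrow> t (elem_mat m n i j) = c i j \<cdot>\<^sub>m outer_mat (x i 0) (y 0 j)"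
proof -
  have "\<exists>c. x i j = c \<cdot>\<^sub>v x i 0" if "i < m" "j < n" for i j
    using row_parallel_of_corner[OF m2 n2 corner, of i 0 j] parallel_vec_iff_smult[OF x_carrier x_carrier x_nonzero]
      that n2 by auto
  then obtain lam where lam: "\<And>i j. i < m \<Longrightarrow> j < n \<Longrightarrow> x i j = lam i j \<cdot>\<^sub>v x i 0" by metis
  have "\<exists>c. y i j = c \<cdot>\<^sub>v y 0 j" if "i < m" "j < n" for i j
    using col_parallel_y_of_corner[OF m2 n2 corner, of 0 i j] parallel_vec_iff_smult[OF y_carrier y_carrier y_nonzero]
      that m2 by auto
  then obtain mu where mu: "\<And>i j. i < m \<Longrightarrow> j < n \<Longrightarrow> y i j = mu i j \<cdot>\<^sub>v y 0 j" by metis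
  show thesis
  proof (rule that[of "\<lambda>i j. lam i j * mu i j"])
    fix i j assume ij: "i < m" "j < n"
    show "t (elem_mat m n i j) = (lam i j * mu i j) \<cdot>\<^sub>m outer_mat (x i 0) (y 0 j)"
      using t_elem_mat[OF ij] lam[OF ij] mu[OF ij] by (simp add: outer_mat_smult)
    have "x i 0 \<in> carrier_vec m'" "y 0 j \<in> carrier_vec n'" using x_carrier y_carrier ij m2 n2 by auto
    then show "lam i j * mu i j \<noteq> 0"
      using lam[OF ij] mu[OF ij] x_nonzero[OF ij] y_nonzero[OF ij] by auto
  qed
qed

text \<open>This holds because \<open>E\<^sub>i\<^sub>j + E\<^sub>i\<^sub>l + E\<^sub>k\<^sub>j + E\<^sub>k\<^sub>l\<close> has rank one.\<close>

lemma scaled_coeffs_cross: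
  assumes m2: "2 \<le> m" and n2: "2 \<le> n" and corner: "parallel_vec (x 0 0) (x 0 1)"
    and t_c: "\<And>i j. i < m \<Longrightarrow> j < n \<Longrightarrow> t (elem_mat m n i j) = c i j \<cdot>\<^sub>m outer_mat (x i 0) (y 0 j)"
    and ij: "i < m" "j < n" and kl: "k < m" "l < n" and skew: "i \<noteq> k" "j \<noteq> l"
  shows "c i j * c k l = c i l * c k j"
proof -
  let ?E = "elem_mat m n :: nat \<Rightarrow> nat \<Rightarrow> 'a mat"
  let ?X = "?E i j + ?E i l + ?E k j + ?E k l"
  have X: "?X \<in> carrier_mat m n" by simp
  have "two_minors_vanish ?X"
    by (rule two_minors_vanish_product[of _ "\<lambda>p. (if p = i then 1 else 0) + (if p = k then 1 else 0)"
          "\<lambda>q. (if q = j then 1 else 0) + (if q = l then 1 else 0)"]) (use skew in auto)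
  then have rk1: "two_minors_vanish (t ?X)" using t_two_minors[OF X] by simp
  have x0: "x a 0 \<in> carrier_vec m'" if "a < m" for a using x_carrier that n2 by auto
  have y0: "y 0 b \<in> carrier_vec n'" if "b < n" for b using y_carrier that m2 by auto
  have t_index: "t (?E a b) $$ (p,s) = c a b * x a 0 $ p * y 0 b $ s"
    if "a < m" "b < n" "p < m'" "s < n'" for a b p s
    unfolding t_c[OF that(1,2)] using that x0[OF that(1)] y0[OF that(2)] by simp
  have "t ?X = t (?E i j) + t (?E i l) + t (?E k j) + t (?E k l)" by (simp add: t_add)
  then have X_index: "t ?X $$ (p,s) = c i j * x i 0 $ p * y 0 j $ s + c i l * x i 0 $ p * y 0 l $ s
       + c k j * x k 0 $ p * y 0 j $ s + c k l * x k 0 $ p * y 0 l $ s" if "p < m'" "s < n'" for p s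
    using that ij kl t_carrier[of "?E i j"] t_carrier[of "?E i l"] t_carrier[of "?E k j"] t_carrier[of "?E k l"]
    by (simp add: t_index)
  have "\<not> parallel_vec (x i 0) (x k 0)"
  proof
    assume "parallel_vec (x i 0) (x k 0)"
    moreover have "parallel_vec (x k 0) (x k 1)" using row_parallel_of_corner[OF m2 n2 corner] kl n2 by auto
    ultimately have "parallel_vec (x i 0) (x k 1)" using parallel_x_trans[of i 0 k 0 k 1] ij kl n2 by auto
    then show False using not_parallel_of_skew(1)[of i 0 k 1] ij kl skew n2 by auto
  qed
  moreover have "\<not> parallel_vec (y 0 j) (y 0 l)"
  proof
    assume "parallel_vec (y 0 j) (y 0 l)"
    moreover have "parallel_vec (y 0 l) (y 1 l)" using col_parallel_y_of_corner[OF m2 n2 corner] kl m2 by auto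
    ultimately have "parallel_vec (y 0 j) (y 1 l)" using parallel_y_trans[of 0 j 0 l 1 l] ij kl m2 by auto
    then show False using not_parallel_of_skew(2)[of 0 j 1 l] ij kl skew m2 by auto
  qed
  ultimately show ?thesis
    using two_minors_vanish_combination[OF t_carrier[OF X] x0[OF ij(1)] x0[OF kl(1)] y0[OF ij(2)] y0[OF kl(2)]
        _ _ X_index rk1] by blast
qed

lemma outer_on_elem_mats_of_corner:
  assumes m2: "2 \<le> m" and n2: "2 \<le> n" and corner: "parallel_vec (x 0 0) (x 0 1)"
  shows "outer_on_elem_mats t m n m' n'"
proof -
  obtain c where c_nz: "\<And>i j. i < m \<Longrightarrow> j < n \<Longrightarrow> c i j \<noteq> 0"
    and t_c: "\<And>i j. i < m \<Longrightarrow> j < n \<Longrightarrow> t (elem_mat m n i j) = c i j \<cdot>\<^sub>m outer_mat (x i 0) (y 0 j)"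
    using elem_images_scaled_of_corner[OF m2 n2 corner] by blast
  have c00: "c 0 0 \<noteq> 0" using c_nz m2 n2 by auto
  have c_split: "c i j = c i 0 * (c 0 j / c 0 0)" if "i < m" "j < n" for i j
  proof (cases "i = 0 \<or> j = 0")
    case True
    then show ?thesis using c00 by auto
  next
    case False
    then have "c i j * c 0 0 = c i 0 * c 0 j"
      using scaled_coeffs_cross[OF m2 n2 corner t_c, of i j 0 0] that m2 n2 by auto
    then show ?thesis using c00 by (simp add: field_simps)
  qed
  show ?thesis unfolding outer_on_elem_mats_def
  proof (intro exI conjI allI impI)
    show "c i 0 \<cdot>\<^sub>v x i 0 \<in> carrier_vec m'" if "i < m" for i using x_carrier that n2 by simp
    show "(c 0 j / c 0 0) \<cdot>\<^sub>v y 0 j \<in> carrier_vec n'" if "j < n" for j using y_carrier that m2 by simp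
    show "t (elem_mat m n i j) = outer_mat (c i 0 \<cdot>\<^sub>v x i 0) ((c 0 j / c 0 0) \<cdot>\<^sub>v y 0 j)"
      if "i < m" "j < n" for i j
      using t_c[OF that] c_split[OF that] by (simp add: outer_mat_smult)
  qed
qed

end

context rank_one_preserver
begin

lemma outer_on_elem_mats_cases:
  assumes m2: "2 \<le> m" and n2: "2 \<le> n"
  shows "outer_on_elem_mats t m n m' n' \<or> outer_on_elem_mats (\<lambda>X. (t X)\<^sup>T) m n n' m'"
proof -
  have "\<exists>x y. t (elem_mat m n i j) = outer_mat x y \<and> x \<in> carrier_vec m' \<and> y \<in> carrier_vec n' \<and>
      x \<noteq> 0\<^sub>v m' \<and> y \<noteq> 0\<^sub>v n'" if "i < m" "j < n" for i j
  proof (rule two_minors_vanish_imp_outer_mat[OF t_carrier])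
    show "two_minors_vanish (t (elem_mat m n i j))"
      using t_two_minors two_minors_vanish_elem_mat by auto
    show "t (elem_mat m n i j) \<noteq> 0\<^sub>m m' n'"
    proof
      assume "t (elem_mat m n i j) = 0\<^sub>m m' n'"
      then have "elem_mat m n i j = (0\<^sub>m m n :: 'a mat)" using t_eq_0[OF elem_mat_carrier] by blast
      then have "elem_mat m n i j $$ (i,j) = (0\<^sub>m m n :: 'a mat) $$ (i,j)" by simp
      then show False using that by simp
    qed
  qed simp
  then obtain x y where xy: "\<And>i j. i < m \<Longrightarrow> j < n \<Longrightarrow> t (elem_mat m n i j) = outer_mat (x i j) (y i j) \<and>
      x i j \<in> carrier_vec m' \<and> y i j \<in> carrier_vec n' \<and> x i j \<noteq> 0\<^sub>v m' \<and> y i j \<noteq> 0\<^sub>v n'"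
    by metis
  interpret factors: rank_one_preserver_factors t m n m' n' x y
    by unfold_locales (simp_all add: xy)
  show ?thesis
  proof (cases "parallel_vec (x 0 0) (x 0 1)")
    case True
    then show ?thesis using factors.outer_on_elem_mats_of_corner[OF m2 n2] by blast
  next
    case False
    then have "parallel_vec (y 0 0) (y 0 1)" using factors.parallel_x_or_y_of_aligned[of 0 0 0 1] m2 n2 by auto
    interpret transposed: rank_one_preserver "\<lambda>X. (t X)\<^sup>T" m n n' m' by (rule rank_one_preserver_transpose)
    interpret transposed_factors: rank_one_preserver_factors "\<lambda>X. (t X)\<^sup>T" m n n' m' y x
      by unfold_locales (simp_all add: xy transpose_outer_mat)
    show ?thesis using transposed_factors.outer_on_elem_mats_of_corner[OF m2 n2] \<open>parallel_vec (y 0 0) (y 0 1)\<close>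
      by blast
  qed
qed

lemma outer_on_elem_mats_single_row:
  assumes "m = 1" "m' = 1"
  shows "outer_on_elem_mats t m n m' n'"
proof -
  let ?\<alpha> = "\<lambda>i. vec 1 (\<lambda>_. 1)" and ?\<beta> = "\<lambda>j. vec n' (\<lambda>q. t (elem_mat m n 0 j) $$ (0,q))"
  have "t (elem_mat m n i j) = outer_mat (?\<alpha> i) (?\<beta> j)" if "i < m" "j < n" for i j
    using t_carrier[of "elem_mat m n i j"] assms that by (intro eq_matI) auto
  then show ?thesis unfolding outer_on_elem_mats_def using assms
    by (intro exI[of _ ?\<alpha>] exI[of _ ?\<beta>]) auto
qed

lemma outer_on_elem_mats_single_col:
  assumes "n = 1" "n' = 1"
  shows "outer_on_elem_mats t m n m' n'"
proof -
  let ?\<alpha> = "\<lambda>i. vec m' (\<lambda>p. t (elem_mat m n i 0) $$ (p,0))" and ?\<beta> = "\<lambda>j. vec 1 (\<lambda>_. 1)"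
  have "t (elem_mat m n i j) = outer_mat (?\<alpha> i) (?\<beta> j)" if "i < m" "j < n" for i j
    using t_carrier[of "elem_mat m n i j"] assms that by (intro eq_matI) auto
  then show ?thesis unfolding outer_on_elem_mats_def using assms
    by (intro exI[of _ ?\<alpha>] exI[of _ ?\<beta>]) auto
qed

text \<open>The witnesses: \<open>A\<close> has the \<open>\<alpha>\<^sub>i\<close> as columns and \<open>B\<close> the \<open>\<beta>\<^sub>j\<close> as rows.\<close>

lemma sandwich_of_outer_on_elem_mats:
  assumes expand: "\<And>X p q. p < m' \<Longrightarrow> q < n' \<Longrightarrow>
      t X $$ (p,q) = (\<Sum>j<n. \<Sum>i<m. t (elem_mat m n i j) $$ (p,q) * X $$ (i,j))"
    and "outer_on_elem_mats t m n m' n'"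
  obtains A B where "A \<in> carrier_mat m' m" "B \<in> carrier_mat n n'"
    and "\<And>X. X \<in> carrier_mat m n \<Longrightarrow> t X = A * X * B"
proof -
  obtain \<alpha> \<beta> where \<alpha>: "\<And>i. i < m \<Longrightarrow> \<alpha> i \<in> carrier_vec m'" and \<beta>: "\<And>j. j < n \<Longrightarrow> \<beta> j \<in> carrier_vec n'"
    and t_elem: "\<And>i j. i < m \<Longrightarrow> j < n \<Longrightarrow> t (elem_mat m n i j) = outer_mat (\<alpha> i) (\<beta> j)"
    using assms(2) unfolding outer_on_elem_mats_def by blast
  define A where "A = mat m' m (\<lambda>(p,i). \<alpha> i $ p)"
  define B where "B = mat n n' (\<lambda>(j,q). \<beta> j $ q)"
  have A: "A \<in> carrier_mat m' m" and B: "B \<in> carrier_mat n n'" unfolding A_def B_def by auto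
  have "t X = A * X * B" if X: "X \<in> carrier_mat m n" for X
  proof (rule eq_matI)
    fix p q assume "p < dim_row (A * X * B)" "q < dim_col (A * X * B)"
    then have pq: "p < m'" "q < n'" using A B by auto
    have "t X $$ (p,q) = (\<Sum>j<n. \<Sum>i<m. A $$ (p,i) * X $$ (i,j) * B $$ (j,q))"
      unfolding expand[OF pq, of X]
      using pq carrier_vecD[OF \<alpha>] carrier_vecD[OF \<beta>]
      by (intro sum.cong refl) (simp add: t_elem A_def B_def mult_ac)
    then show "t X $$ (p,q) = (A * X * B) $$ (p,q)" by (simp add: mult_mat3_index[OF A X B pq])
  qed (use A B X t_carrier[OF X] in auto)
  with A B that show thesis by blast
qed

lemma sandwich_factors_injective:
  assumes A: "A \<in> carrier_mat m' m" and B: "B \<in> carrier_mat n n'"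
    and sandwich: "\<And>X. X \<in> carrier_mat m n \<Longrightarrow> t X = A * X * B" and "0 < m" "0 < n"
  shows "v \<in> carrier_vec m \<Longrightarrow> A *\<^sub>v v = 0\<^sub>v m' \<Longrightarrow> v = 0\<^sub>v m"
    and "w \<in> carrier_vec n \<Longrightarrow> B\<^sup>T *\<^sub>v w = 0\<^sub>v n' \<Longrightarrow> w = 0\<^sub>v n"
proof -
  assume v: "v \<in> carrier_vec m" and Av: "A *\<^sub>v v = 0\<^sub>v m'"
  let ?X = "outer_mat v (unit_vec n 0)"
  have X: "?X \<in> carrier_mat m n" using v by auto
  have "A * ?X = 0\<^sub>m m' n" using mult_outer_mat[OF A v] Av by (simp add: outer_mat_zero_left)
  then have "t ?X = 0\<^sub>m m' n'" using sandwich[OF X] B by simp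
  then have "?X = 0\<^sub>m m n" using t_eq_0[OF X] by simp
  then show "v = 0\<^sub>v m" using outer_mat_unit_vec_right_eq_0 assms v by blast
next
  assume w: "w \<in> carrier_vec n" and Bw: "B\<^sup>T *\<^sub>v w = 0\<^sub>v n'"
  let ?X = "outer_mat (unit_vec m 0) w"
  have X: "?X \<in> carrier_mat m n" using w by auto
  have "?X * B = 0\<^sub>m m n'" using outer_mat_mult[OF B w] Bw by (simp add: outer_mat_zero_right)
  then have "t ?X = 0\<^sub>m m' n'" using sandwich[OF X] A X B by simp
  then have "?X = 0\<^sub>m m n" using t_eq_0[OF X] by simp
  then show "w = 0\<^sub>v n" using outer_mat_unit_vec_left_eq_0 assms w by blast
qed

end

section \<open>Vectorization\<close>

lemma sum_lessThan_mult_split: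
  fixes g :: "nat \<Rightarrow> 'a::comm_monoid_add"
  shows "(\<Sum>k<m*n. g k) = (\<Sum>j<n. \<Sum>i<m. g (j*m + i))"
proof -
  have "(\<Sum>k<n*m. g k) = (\<Sum>j<n. sum g {j*m..<j*m+m})" using sum.nat_group[of g m n] by simp
  also have "\<dots> = (\<Sum>j<n. \<Sum>i<m. g (j*m + i))"
  proof (rule sum.cong[OF refl])
    fix j
    have "sum g {0 + j*m..<m + j*m} = sum (\<lambda>i. g (i + j*m)) {0..<m}" by (rule sum.shift_bounds_nat_ivl)
    then show "sum g {j*m..<j*m+m} = (\<Sum>i<m. g (j*m + i))" by (simp add: atLeast0LessThan add.commute)
  qed
  finally show ?thesis by (simp add: mult.commute)
qed

lemma col_major_index_less: "i < m \<Longrightarrow> j < n \<Longrightarrow> j * m + i < m * (n::nat)"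
proof -
  assume "i < m" "j < n"
  then have "j * m + i < (j + 1) * m" by simp
  also have "\<dots> \<le> n * m" using \<open>j < n\<close> by (intro mult_right_mono) auto
  finally show ?thesis by (simp add: mult.commute)
qed

lemma mod_div_less_of_less_mult: "k < m * (n::nat) \<Longrightarrow> k mod m < m \<and> k div m < n"
  by (cases "m = 0") (auto simp: less_mult_imp_div_less mult.commute)

lemma vecz_carrier [simp]: "vecz m n X \<in> carrier_vec (m*n)"
  and vecz_dim [simp]: "dim_vec (vecz m n X) = m*n"
  and foldv_carrier [simp]: "foldv m n a \<in> carrier_mat m n"
  and foldv_dim [simp]: "dim_row (foldv m n a) = m" "dim_col (foldv m n a) = n"
  unfolding vecz_def foldv_def by simp_all

lemma vecz_index [simp]: "k < m*n \<Longrightarrow> vecz m n X $ k = X $$ (k mod m, k div m)"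
  and foldv_index [simp]: "p < m \<Longrightarrow> q < n \<Longrightarrow> foldv m n a $$ (p,q) = a $ (q*m+p)"
  unfolding vecz_def foldv_def by simp_all

lemma foldv_vecz: "X \<in> carrier_mat m n \<Longrightarrow> foldv m n (vecz m n X) = X"
  by (intro eq_matI) (auto simp: col_major_index_less)

lemma vecz_foldv: "a \<in> carrier_vec (m*n) \<Longrightarrow> vecz m n (foldv m n a) = a"
  by (intro eq_vecI) (auto dest!: mod_div_less_of_less_mult simp: mult.commute)

lemma vecz_add: "X \<in> carrier_mat m n \<Longrightarrow> Y \<in> carrier_mat m n \<Longrightarrow> vecz m n (X + Y) = vecz m n X + vecz m n Y"
  and vecz_smult: "X \<in> carrier_mat m n \<Longrightarrow> vecz m n (c \<cdot>\<^sub>m X) = c \<cdot>\<^sub>v vecz m n X"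
  and vecz_zero: "vecz m n (0\<^sub>m m n) = 0\<^sub>v (m*n)"
  by (intro eq_vecI; auto dest: mod_div_less_of_less_mult)+

lemma foldv_add: "a \<in> carrier_vec (m*n) \<Longrightarrow> b \<in> carrier_vec (m*n) \<Longrightarrow> foldv m n (a + b) = foldv m n a + foldv m n b"
  and foldv_smult: "a \<in> carrier_vec (m*n) \<Longrightarrow> foldv m n (c \<cdot>\<^sub>v a) = c \<cdot>\<^sub>m foldv m n a"
  and foldv_zero: "foldv m n (0\<^sub>v (m*n)) = 0\<^sub>m m n"
  by (intro eq_matI; auto simp: col_major_index_less)+

lemma vecz_inject: "X \<in> carrier_mat m n \<Longrightarrow> Y \<in> carrier_mat m n \<Longrightarrow> vecz m n X = vecz m n Y \<longleftrightarrow> X = Y"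
  using foldv_vecz by metis

lemma vecz_eq_0_iff: "X \<in> carrier_mat m n \<Longrightarrow> vecz m n X = 0\<^sub>v (m*n) \<longleftrightarrow> X = 0\<^sub>m m n"
  using foldv_vecz foldv_zero vecz_zero by metis

definition mat_action :: "nat \<Rightarrow> nat \<Rightarrow> complex mat \<Rightarrow> complex mat \<Rightarrow> complex mat" where
  "mat_action m n M X = foldv m n (M *\<^sub>v vecz m n X)"

definition preserves_rank :: "nat \<Rightarrow> nat \<Rightarrow> complex mat \<Rightarrow> bool" where
  "preserves_rank m n M \<longleftrightarrow> (\<forall>a\<in>carrier_vec (m*n). mrank (foldv m n (M *\<^sub>v a)) = mrank (foldv m n a))"

lemma mat_action_carrier [simp]: "mat_action m n M X \<in> carrier_mat m n"
  and mat_action_dim [simp]: "dim_row (mat_action m n M X) = m" "dim_col (mat_action m n M X) = n"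
  unfolding mat_action_def by simp_all

lemma vecz_mat_action:
  "M \<in> carrier_mat (m*n) (m*n) \<Longrightarrow> vecz m n (mat_action m n M X) = M *\<^sub>v vecz m n X"
  unfolding mat_action_def by (simp add: vecz_foldv)

lemma mat_action_index:
  assumes M: "M \<in> carrier_mat (m*n) (m*n)" and pq: "p < m" "q < n"
  shows "mat_action m n M X $$ (p,q) = (\<Sum>j<n. \<Sum>i<m. M $$ (q*m+p, j*m+i) * X $$ (i,j))"
proof -
  have "mat_action m n M X $$ (p,q) = (\<Sum>k<m*n. M $$ (q*m+p, k) * X $$ (k mod m, k div m))"
    unfolding mat_action_def using pq M col_major_index_less[OF pq]
    by (simp add: scalar_prod_def atLeast0LessThan)
  then show ?thesis unfolding sum_lessThan_mult_split by simp
qed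

lemma mat_action_elem_mat:
  assumes M: "M \<in> carrier_mat (m*n) (m*n)" and pq: "p < m" "q < n" and ij: "i < m" "j < n"
  shows "mat_action m n M (elem_mat m n i j) $$ (p,q) = M $$ (q*m+p, j*m+i)"
proof -
  have "mat_action m n M (elem_mat m n i j) $$ (p,q) =
      (\<Sum>j'<n. \<Sum>i'<m. if i' = i then (if j' = j then M $$ (q*m+p, j*m+i) else 0) else 0)"
    unfolding mat_action_index[OF M pq] by (intro sum.cong refl) auto
  also have "\<dots> = (\<Sum>j'<n. if j' = j then M $$ (q*m+p, j*m+i) else 0)"
    using ij by (intro sum.cong refl) simp
  also have "\<dots> = M $$ (q*m+p, j*m+i)" using ij by simp
  finally show ?thesis .
qed

lemma mat_action_expand:
  assumes M: "M \<in> carrier_mat (m*n) (m*n)" and pq: "p < m" "q < n"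
  shows "mat_action m n M X $$ (p,q) =
    (\<Sum>j<n. \<Sum>i<m. mat_action m n M (elem_mat m n i j) $$ (p,q) * X $$ (i,j))"
  unfolding mat_action_index[OF M pq, of X] using mat_action_elem_mat[OF M pq] by (intro sum.cong refl) simp

lemma rank_one_preserver_mat_action:
  assumes M: "M \<in> carrier_mat (m*n) (m*n)" and "invertible_mat M" and "preserves_rank m n M"
  shows "rank_one_preserver (mat_action m n M) m n m n"
proof (unfold_locales)
  fix X :: "complex mat" assume X: "X \<in> carrier_mat m n"
  show "mat_action m n M X \<in> carrier_mat m n" by simp
  show "mat_action m n M (c \<cdot>\<^sub>m X) = c \<cdot>\<^sub>m mat_action m n M X" for c
    unfolding mat_action_def vecz_smult[OF X] using M by (simp add: mult_mat_vec foldv_smult)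
  have "mrank (mat_action m n M X) = mrank X"
    using assms(3) foldv_vecz[OF X] unfolding mat_action_def preserves_rank_def by (metis vecz_carrier)
  then show "two_minors_vanish (mat_action m n M X) \<longleftrightarrow> two_minors_vanish X"
    using mrank_le_1_iff[OF X] mrank_le_1_iff[OF mat_action_carrier] by metis
  show "X = 0\<^sub>m m n" if "mat_action m n M X = 0\<^sub>m m n"
  proof -
    have "M *\<^sub>v vecz m n X = 0\<^sub>v (m*n)" using vecz_mat_action[OF M, of X] that by (simp add: vecz_zero)
    then show ?thesis using assms(2) invertible_mat_iff_kernel[OF M] vecz_eq_0_iff[OF X] by simp
  qed
  fix Y :: "complex mat" assume Y: "Y \<in> carrier_mat m n"
  show "mat_action m n M (X + Y) = mat_action m n M X + mat_action m n M Y"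
    unfolding mat_action_def vecz_add[OF X Y] using M
    by (simp add: mult_add_distrib_mat_vec[of M "m*n" "m*n"] foldv_add)
qed

text \<open>The matrix of \<open>X \<mapsto> A X B\<close> under vectorization, i.e. \<open>B\<^sup>T \<otimes> A\<close>.\<close>

definition sandwich_mat :: "nat \<Rightarrow> nat \<Rightarrow> complex mat \<Rightarrow> complex mat \<Rightarrow> complex mat" where
  "sandwich_mat m n A B = mat (m*n) (m*n) (\<lambda>(a,b). A $$ (a mod m, b mod m) * B $$ (b div m, a div m))"

lemma sandwich_mat_carrier [simp]: "sandwich_mat m n A B \<in> carrier_mat (m*n) (m*n)"
  unfolding sandwich_mat_def by simp

lemma sandwich_mat_index:
  assumes "p < m" "i < m" "q < n" "j < n"
  shows "sandwich_mat m n A B $$ (q*m+p, j*m+i) = A $$ (p,i) * B $$ (j,q)"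
  using assms col_major_index_less[of p m q n] col_major_index_less[of i m j n]
  unfolding sandwich_mat_def by simp

lemma mat_action_sandwich_mat:
  assumes A: "A \<in> carrier_mat m m" and B: "B \<in> carrier_mat n n" and X: "X \<in> carrier_mat m n"
  shows "mat_action m n (sandwich_mat m n A B) X = A * X * B"
proof (rule eq_matI)
  fix p q assume "p < dim_row (A * X * B)" "q < dim_col (A * X * B)"
  then have pq: "p < m" "q < n" using A B by auto
  have "mat_action m n (sandwich_mat m n A B) X $$ (p,q) = (\<Sum>j<n. \<Sum>i<m. A $$ (p,i) * X $$ (i,j) * B $$ (j,q))"
    unfolding mat_action_index[OF sandwich_mat_carrier pq]
  proof (intro sum.cong refl)
    fix j i assume "j \<in> {..<n}" "i \<in> {..<m}"
    then show "sandwich_mat m n A B $$ (q*m+p, j*m+i) * X $$ (i,j) = A $$ (p,i) * X $$ (i,j) * B $$ (j,q)"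
      using pq by (subst sandwich_mat_index) (auto simp: mult_ac)
  qed
  then show "mat_action m n (sandwich_mat m n A B) X $$ (p,q) = (A * X * B) $$ (p,q)"
    by (simp add: mult_mat3_index[OF A X B pq])
qed (use A B in auto)

lemma invertible_sandwich_mat:
  assumes A: "A \<in> carrier_mat m m" "invertible_mat A" and B: "B \<in> carrier_mat n n" "invertible_mat B"
  shows "invertible_mat (sandwich_mat m n A B)"
  unfolding invertible_mat_iff_kernel[OF sandwich_mat_carrier]
proof (intro ballI impI)
  fix v :: "complex vec"
  assume v: "v \<in> carrier_vec (m*n)" and Kv: "sandwich_mat m n A B *\<^sub>v v = 0\<^sub>v (m*n)"
  define X where "X = foldv m n v"
  have X: "X \<in> carrier_mat m n" and v_X: "v = vecz m n X" unfolding X_def using vecz_foldv[OF v] by simp_all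
  have "vecz m n (A * X * B) = sandwich_mat m n A B *\<^sub>v vecz m n X"
    using vecz_mat_action[OF sandwich_mat_carrier, of m n A B X] by (simp add: mat_action_sandwich_mat[OF A(1) B(1) X])
  then have "vecz m n (A * X * B) = 0\<^sub>v (m*n)" using Kv v_X by simp
  moreover have "A * X * B \<in> carrier_mat m n" using A B X by simp
  ultimately have AXB: "A * X * B = 0\<^sub>m m n" using vecz_eq_0_iff by blast
  obtain A' where A': "A' \<in> carrier_mat m m" "A' * A = 1\<^sub>m m"
    using A invertible_mat_iff_inverse[OF A(1)] by auto
  obtain B' where B': "B' \<in> carrier_mat n n" "B * B' = 1\<^sub>m n"
    using B invertible_mat_iff_inverse[OF B(1)] by auto
  have "X = A' * (A * X * B) * B'" using mult_inverses_cancel[OF A(1) A'(1) A'(2) B(1) B'(1) B'(2) X] by simp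
  also have "\<dots> = 0\<^sub>m m n" unfolding AXB using A'(1) B'(1) by simp
  finally show "v = 0\<^sub>v (m*n)" using v_X vecz_zero by simp
qed

lemma mat_action_outer_on_elem_mats_cases:
  assumes "M \<in> carrier_mat (m*n) (m*n)" "invertible_mat M" "preserves_rank m n M" "0 < m" "0 < n"
  obtains "outer_on_elem_mats (mat_action m n M) m n m n"
  | "outer_on_elem_mats (\<lambda>X. (mat_action m n M X)\<^sup>T) m n n m"
proof -
  interpret rank_one_preserver "mat_action m n M" m n m n
    using rank_one_preserver_mat_action assms by blast
  consider "m = 1" | "n = 1" | "2 \<le> m" "2 \<le> n" using assms(4,5) by linarith
  then show thesis
  proof cases
    case 1
    then show thesis using outer_on_elem_mats_single_row that(1) by simp
  next
    case 2
    then show thesis using outer_on_elem_mats_single_col that(1) by simp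
  next
    case 3
    then show thesis using outer_on_elem_mats_cases that by blast
  qed
qed

lemma mat_action_sandwich_of_outer:
  assumes M: "M \<in> carrier_mat (m*n) (m*n)" and Mi: "invertible_mat M" and rk: "preserves_rank m n M"
    and m0: "0 < m" and n0: "0 < n" and outer: "outer_on_elem_mats (mat_action m n M) m n m n"
  obtains A B where "A \<in> carrier_mat m m" "invertible_mat A" "B \<in> carrier_mat n n" "invertible_mat B"
    "\<And>X. X \<in> carrier_mat m n \<Longrightarrow> mat_action m n M X = A * X * B"
proof -
  interpret rank_one_preserver "mat_action m n M" m n m n
    using rank_one_preserver_mat_action M Mi rk by blast
  obtain A B where A: "A \<in> carrier_mat m m" and B: "B \<in> carrier_mat n n"
    and AXB: "\<And>X. X \<in> carrier_mat m n \<Longrightarrow> mat_action m n M X = A * X * B"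
  proof (rule sandwich_of_outer_on_elem_mats[OF mat_action_expand[OF M] outer])
    fix A B assume "A \<in> carrier_mat m m" "B \<in> carrier_mat n n"
      "\<And>X. X \<in> carrier_mat m n \<Longrightarrow> mat_action m n M X = A * X * B"
    then show thesis by (rule that)
  qed
  note inj = sandwich_factors_injective[OF A B AXB m0 n0]
  have Bt: "B\<^sup>T \<in> carrier_mat n n" using B by simp
  have "invertible_mat A" using inj(1) by (simp add: invertible_mat_iff_kernel[OF A])
  moreover have "invertible_mat B"
    using inj(2) by (simp add: invertible_mat_iff_kernel[OF Bt] invertible_mat_transpose_iff[OF B, symmetric])
  ultimately show thesis using that[OF A _ B _ AXB] by blast
qed

text \<open>Here \<open>X \<mapsto> (mat_action m n M X)\<^sup>T\<close> has the form \<open>A X B\<close> with \<open>A, B \<in> K\<^sup>n\<^sup>\<times>\<^sup>m\<close>; injectivity of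
  \<open>A\<close> and \<open>B\<^sup>T\<close> forces \<open>m = n\<close>.\<close>

lemma mat_action_transposed_sandwich_of_outer:
  assumes M: "M \<in> carrier_mat (m*n) (m*n)" and Mi: "invertible_mat M" and rk: "preserves_rank m n M"
    and m0: "0 < m" and n0: "0 < n" and outer: "outer_on_elem_mats (\<lambda>X. (mat_action m n M X)\<^sup>T) m n n m"
  obtains A B where "m = n" "A \<in> carrier_mat m m" "invertible_mat A" "B \<in> carrier_mat m m"
    "invertible_mat B" "\<And>X. X \<in> carrier_mat m n \<Longrightarrow> mat_action m n M X = A * X\<^sup>T * B"
proof -
  interpret T: rank_one_preserver "mat_action m n M" m n m n
    using rank_one_preserver_mat_action M Mi rk by blast
  interpret TT: rank_one_preserver "\<lambda>X. (mat_action m n M X)\<^sup>T" m n n m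
    by (rule T.rank_one_preserver_transpose)
  have expand: "(mat_action m n M X)\<^sup>T $$ (p,q) =
      (\<Sum>j<n. \<Sum>i<m. (mat_action m n M (elem_mat m n i j))\<^sup>T $$ (p,q) * X $$ (i,j))"
    if pq: "p < n" "q < m" for X p q
    using mat_action_expand[OF M pq(2,1), of X] pq by simp
  obtain A B where A: "A \<in> carrier_mat n m" and B: "B \<in> carrier_mat n m"
    and AXB: "\<And>X. X \<in> carrier_mat m n \<Longrightarrow> (mat_action m n M X)\<^sup>T = A * X * B"
  proof (rule TT.sandwich_of_outer_on_elem_mats[OF expand outer])
    fix A B assume "A \<in> carrier_mat n m" "B \<in> carrier_mat n m"
      "\<And>X. X \<in> carrier_mat m n \<Longrightarrow> (mat_action m n M X)\<^sup>T = A * X * B"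
    then show thesis by (rule that)
  qed
  note inj = TT.sandwich_factors_injective[OF A B AXB m0 n0]
  have Bt: "B\<^sup>T \<in> carrier_mat m n" using B by simp
  have mn: "m = n"
    using injective_mat_dim_le[OF A inj(1)] injective_mat_dim_le[OF Bt inj(2)] by (rule antisym)
  have A': "A \<in> carrier_mat m m" and B': "B \<in> carrier_mat m m" using A B mn by simp_all
  have "invertible_mat A\<^sup>T"
    using inj(1) mn by (simp add: invertible_mat_iff_kernel[OF A'] invertible_mat_transpose_iff[OF A'])
  moreover have "invertible_mat B\<^sup>T"
    using inj(2) mn B' by (simp add: invertible_mat_iff_kernel)
  moreover have "mat_action m n M X = B\<^sup>T * X\<^sup>T * A\<^sup>T" if X: "X \<in> carrier_mat m n" for X
  proof -
    have "mat_action m n M X = (A * X * B)\<^sup>T" using AXB[OF X, symmetric] by simp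
    also have "\<dots> = B\<^sup>T * X\<^sup>T * A\<^sup>T" using A' B' X mn by (simp add: transpose_mult[of _ m m _ m])
    finally show ?thesis .
  qed
  moreover have "B\<^sup>T \<in> carrier_mat m m" "A\<^sup>T \<in> carrier_mat m m" using A' B' by simp_all
  ultimately show thesis using that[OF mn] by blast
qed

lemma rank_preserving_mat_action_cases:
  assumes M: "M \<in> carrier_mat (m*n) (m*n)" and Mi: "invertible_mat M" and rk: "preserves_rank m n M"
  obtains (direct) A B where "A \<in> carrier_mat m m" "invertible_mat A" "B \<in> carrier_mat n n" "invertible_mat B"
    "\<And>X. X \<in> carrier_mat m n \<Longrightarrow> mat_action m n M X = A * X * B"
  | (transposed) A B where "m = n" "A \<in> carrier_mat m m" "invertible_mat A" "B \<in> carrier_mat m m"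
    "invertible_mat B" "\<And>X. X \<in> carrier_mat m n \<Longrightarrow> mat_action m n M X = A * X\<^sup>T * B"
proof (cases "m = 0 \<or> n = 0")
  case True
  then have "mat_action m n M X = 1\<^sub>m m * X * 1\<^sub>m n" if "X \<in> carrier_mat m n" for X
    using that by (intro eq_matI) auto
  then show thesis using direct[of "1\<^sub>m m" "1\<^sub>m n"] by simp
next
  case False
  then have m0: "0 < m" and n0: "0 < n" by auto
  show thesis
  proof (rule mat_action_outer_on_elem_mats_cases[OF M Mi rk m0 n0])
    assume outer: "outer_on_elem_mats (mat_action m n M) m n m n"
    show thesis
    proof (rule mat_action_sandwich_of_outer[OF M Mi rk m0 n0 outer])
      fix A B assume "A \<in> carrier_mat m m" "invertible_mat A" "B \<in> carrier_mat n n" "invertible_mat B"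
        "\<And>X. X \<in> carrier_mat m n \<Longrightarrow> mat_action m n M X = A * X * B"
      then show thesis by (rule direct)
    qed
  next
    assume outer: "outer_on_elem_mats (\<lambda>X. (mat_action m n M X)\<^sup>T) m n n m"
    show thesis
    proof (rule mat_action_transposed_sandwich_of_outer[OF M Mi rk m0 n0 outer])
      fix A B assume "m = n" "A \<in> carrier_mat m m" "invertible_mat A" "B \<in> carrier_mat m m"
        "invertible_mat B" "\<And>X. X \<in> carrier_mat m n \<Longrightarrow> mat_action m n M X = A * X\<^sup>T * B"
      then show thesis by (rule transposed)
    qed
  qed
qed

section \<open>Linear combinations of matrices\<close>

lemma foldr_lincomb:
  assumes "\<forall>i\<in>set xs. G i \<in> carrier_mat m n"
  shows "foldr (\<lambda>i acc. c i \<cdot>\<^sub>m G i + acc) xs (0\<^sub>m m n) \<in> carrier_mat m n \<and>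
    (\<forall>p<m. \<forall>q<n. foldr (\<lambda>i acc. c i \<cdot>\<^sub>m G i + acc) xs (0\<^sub>m m n) $$ (p,q) =
      sum_list (map (\<lambda>i. c i * G i $$ (p,q)) xs))"
  using assms by (induction xs) auto

lemma lincomb_mats_carrier:
  assumes "\<forall>G\<in>set Gs. G \<in> carrier_mat m n"
  shows "lincomb_mats m n c Gs \<in> carrier_mat m n"
  unfolding lincomb_mats_def using foldr_lincomb[of "[0..<length Gs]" "\<lambda>i. Gs ! i" m n c] assms by auto

lemma lincomb_mats_dim:
  assumes "\<forall>G\<in>set Gs. G \<in> carrier_mat m n"
  shows "dim_row (lincomb_mats m n c Gs) = m" "dim_col (lincomb_mats m n c Gs) = n"
  using lincomb_mats_carrier[OF assms] by auto

lemma lincomb_mats_index: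
  assumes "\<forall>G\<in>set Gs. G \<in> carrier_mat m n" and pq: "p < m" "q < n"
  shows "lincomb_mats m n c Gs $$ (p,q) = (\<Sum>i<length Gs. c i * (Gs ! i) $$ (p,q))"
proof -
  have "lincomb_mats m n c Gs $$ (p,q) = sum_list (map (\<lambda>i. c i * (Gs ! i) $$ (p,q)) [0..<length Gs])"
    unfolding lincomb_mats_def using foldr_lincomb[of "[0..<length Gs]" "\<lambda>i. Gs ! i" m n c] assms by auto
  then show ?thesis by (simp add: sum_set_upt_conv_sum_list_nat[symmetric] atLeast0LessThan)
qed

lemma lincomb_mats_cong:
  assumes Gs: "\<forall>G\<in>set Gs. G \<in> carrier_mat m n" and cd: "\<And>i. i < length Gs \<Longrightarrow> c i = d i"
  shows "lincomb_mats m n c Gs = lincomb_mats m n d Gs"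
  by (rule eq_matI) (simp_all add: lincomb_mats_index[OF Gs] lincomb_mats_dim[OF Gs] cd)

lemma lincomb_mats_append_zero:
  assumes Gs: "\<forall>G\<in>set Gs. G \<in> carrier_mat m n" and Hs: "\<forall>G\<in>set Hs. G \<in> carrier_mat m n"
    and zero: "\<And>i. length Gs \<le> i \<Longrightarrow> i < length Gs + length Hs \<Longrightarrow> c i = 0"
  shows "lincomb_mats m n c (Gs @ Hs) = lincomb_mats m n c Gs"
proof (rule eq_matI)
  have GH: "\<forall>G\<in>set (Gs @ Hs). G \<in> carrier_mat m n" using Gs Hs by auto
  fix p q assume "p < dim_row (lincomb_mats m n c Gs)" "q < dim_col (lincomb_mats m n c Gs)"
  then have pq: "p < m" "q < n" using lincomb_mats_dim[OF Gs] by auto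
  have "(\<Sum>i<length (Gs @ Hs). c i * ((Gs @ Hs) ! i) $$ (p,q)) = (\<Sum>i<length Gs. c i * ((Gs @ Hs) ! i) $$ (p,q))"
    by (rule sum.mono_neutral_right) (use zero in auto)
  then show "lincomb_mats m n c (Gs @ Hs) $$ (p,q) = lincomb_mats m n c Gs $$ (p,q)"
    unfolding lincomb_mats_index[OF GH pq] lincomb_mats_index[OF Gs pq] by (simp add: nth_append)
qed (use Gs Hs lincomb_mats_dim[of "Gs @ Hs" m n c] lincomb_mats_dim[OF Gs, of c] in auto)

lemma mult_lincomb_mats:
  assumes Gs: "\<forall>G\<in>set Gs. G \<in> carrier_mat m n" and A: "A \<in> carrier_mat m' m" and B: "B \<in> carrier_mat n n'"
  shows "A * lincomb_mats m n c Gs * B = lincomb_mats m' n' c (map (\<lambda>G. A * G * B) Gs)"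
proof -
  have Gs': "\<forall>G\<in>set (map (\<lambda>G. A * G * B) Gs). G \<in> carrier_mat m' n'" using Gs A B by auto
  have L: "lincomb_mats m n c Gs \<in> carrier_mat m n" by (rule lincomb_mats_carrier[OF Gs])
  show ?thesis
  proof (rule eq_matI)
    fix p q assume "p < dim_row (lincomb_mats m' n' c (map (\<lambda>G. A * G * B) Gs))"
      "q < dim_col (lincomb_mats m' n' c (map (\<lambda>G. A * G * B) Gs))"
    then have pq: "p < m'" "q < n'" using lincomb_mats_dim[OF Gs'] by auto
    have "(A * lincomb_mats m n c Gs * B) $$ (p,q) =
       (\<Sum>j<n. \<Sum>i<m. \<Sum>k<length Gs. c k * (A $$ (p,i) * (Gs ! k) $$ (i,j) * B $$ (j,q)))"
      unfolding mult_mat3_index[OF A L B pq]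
      by (simp add: lincomb_mats_index[OF Gs] sum_distrib_left sum_distrib_right mult_ac)
    also have "\<dots> = (\<Sum>k<length Gs. \<Sum>j<n. \<Sum>i<m. c k * (A $$ (p,i) * (Gs ! k) $$ (i,j) * B $$ (j,q)))"
      by (subst sum.swap, rule sum.cong[OF refl], rule sum.swap)
    also have "\<dots> = (\<Sum>k<length Gs. c k * (A * (Gs ! k) * B) $$ (p,q))"
    proof (rule sum.cong[OF refl])
      fix k assume "k \<in> {..<length Gs}"
      then have Gk: "Gs ! k \<in> carrier_mat m n" using Gs by auto
      show "(\<Sum>j<n. \<Sum>i<m. c k * (A $$ (p,i) * (Gs ! k) $$ (i,j) * B $$ (j,q))) = c k * (A * (Gs ! k) * B) $$ (p,q)"
        unfolding mult_mat3_index[OF A Gk B pq] by (simp add: sum_distrib_left)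
    qed
    finally show "(A * lincomb_mats m n c Gs * B) $$ (p,q) = lincomb_mats m' n' c (map (\<lambda>G. A * G * B) Gs) $$ (p,q)"
      unfolding lincomb_mats_index[OF Gs' pq] by simp
  qed (use A B L lincomb_mats_dim[OF Gs'] in auto)
qed

lemma transpose_lincomb_mats:
  assumes Gs: "\<forall>G\<in>set Gs. G \<in> carrier_mat m n"
  shows "(lincomb_mats m n c Gs)\<^sup>T = lincomb_mats n m c (map transpose_mat Gs)"
proof -
  have Gs': "\<forall>G\<in>set (map transpose_mat Gs). G \<in> carrier_mat n m" using Gs by auto
  show ?thesis
  proof (rule eq_matI)
    fix i j assume "i < dim_row (lincomb_mats n m c (map transpose_mat Gs))"
      "j < dim_col (lincomb_mats n m c (map transpose_mat Gs))"
    then have ij: "i < n" "j < m" using lincomb_mats_dim[OF Gs'] by auto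
    have "Gs ! k $$ (j,i) = (Gs ! k)\<^sup>T $$ (i,j)" if "k < length Gs" for k
    proof -
      have "Gs ! k \<in> carrier_mat m n" using Gs that by simp
      then show ?thesis using ij by simp
    qed
    then show "(lincomb_mats m n c Gs)\<^sup>T $$ (i,j) = lincomb_mats n m c (map transpose_mat Gs) $$ (i,j)"
      using ij lincomb_mats_dim[OF Gs]
      by (simp add: lincomb_mats_index[OF Gs'] lincomb_mats_index[OF Gs])
  qed (use lincomb_mats_dim[OF Gs] lincomb_mats_dim[OF Gs'] in auto)
qed

section \<open>States, complementary states and SLOCC equivalence\<close>

lemma U_mat_carrier: "U_mat m n Gs \<in> carrier_mat (m*n) (length Gs)"
  unfolding U_mat_def using mat_of_cols_carrier(1)[of "m*n" "map (vecz m n) Gs"] by simp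

lemma U_mat_mult_vec:
  assumes Gs: "\<forall>G\<in>set Gs. G \<in> carrier_mat m n" and c: "c \<in> carrier_vec (length Gs)"
  shows "U_mat m n Gs *\<^sub>v c = vecz m n (lincomb_mats m n (\<lambda>i. c $ i) Gs)"
proof (rule eq_vecI)
  fix i assume "i < dim_vec (vecz m n (lincomb_mats m n (\<lambda>i. c $ i) Gs))"
  then have i: "i < m*n" by simp
  then have "(U_mat m n Gs *\<^sub>v c) $ i = (\<Sum>k<length Gs. c $ k * (Gs ! k) $$ (i mod m, i div m))"
    using c U_mat_carrier[of m n Gs]
    by (simp add: scalar_prod_def atLeast0LessThan U_mat_def mat_of_cols_index mult.commute)
  then show "(U_mat m n Gs *\<^sub>v c) $ i = vecz m n (lincomb_mats m n (\<lambda>i. c $ i) Gs) $ i"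
    using i mod_div_less_of_less_mult[OF i] by (simp add: lincomb_mats_index[OF Gs])
qed (use U_mat_carrier[of m n Gs] in simp)

lemma U_mat_mult_unit_vec:
  assumes k: "k < length Gs"
  shows "U_mat m n Gs *\<^sub>v unit_vec (length Gs) k = vecz m n (Gs ! k)"
proof (rule eq_vecI)
  fix i assume "i < dim_vec (vecz m n (Gs ! k))"
  then have i: "i < m*n" by simp
  have "(U_mat m n Gs *\<^sub>v unit_vec (length Gs) k) $ i = row (U_mat m n Gs) i $ k"
    using i k U_mat_carrier[of m n Gs] by simp
  then show "(U_mat m n Gs *\<^sub>v unit_vec (length Gs) k) $ i = vecz m n (Gs ! k) $ i"
    using i k U_mat_carrier[of m n Gs] by (simp add: U_mat_def mat_of_cols_index)
qed (use U_mat_carrier[of m n Gs] in simp)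

lemma basis_mats_U_mat_kernel:
  assumes B: "basis_mats m n Gs" and c: "c \<in> carrier_vec (length Gs)"
    and Uc: "U_mat m n Gs *\<^sub>v c = 0\<^sub>v (m*n)"
  shows "c = 0\<^sub>v (length Gs)"
proof -
  have Gs: "\<forall>G\<in>set Gs. G \<in> carrier_mat m n"
    and uniq: "\<exists>!c. c \<in> carrier_vec (length Gs) \<and> 0\<^sub>m m n = lincomb_mats m n (\<lambda>i. c $ i) Gs"
    using B unfolding basis_mats_def by auto
  have "vecz m n (lincomb_mats m n (\<lambda>i. c $ i) Gs) = 0\<^sub>v (m*n)" using U_mat_mult_vec[OF Gs c] Uc by simp
  then have "lincomb_mats m n (\<lambda>i. c $ i) Gs = 0\<^sub>m m n"
    using vecz_eq_0_iff[OF lincomb_mats_carrier[OF Gs]] by blast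
  moreover have "lincomb_mats m n (\<lambda>i. 0\<^sub>v (length Gs) $ i) Gs = 0\<^sub>m m n"
    by (rule eq_matI) (simp_all add: lincomb_mats_index[OF Gs] lincomb_mats_dim[OF Gs])
  ultimately show ?thesis using uniq c by (metis zero_carrier_vec)
qed

lemma complementary_U_mat:
  assumes S: "state_fmt r m n Psi" and C: "complementary m n Psi C"
  shows "r \<le> m*n" "length (Psi @ C) = m*n" "U_mat m n (Psi @ C) \<in> carrier_mat (m*n) (m*n)"
    "invertible_mat (U_mat m n (Psi @ C))" "\<forall>G\<in>set (Psi @ C). G \<in> carrier_mat m n"
proof -
  have B: "basis_mats m n (Psi @ C)" using C unfolding complementary_def by simp
  show "\<forall>G\<in>set (Psi @ C). G \<in> carrier_mat m n" using B unfolding basis_mats_def by simp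
  have len: "length (Psi @ C) = r + (m*n - r)" using S C unfolding state_fmt_def complementary_def by simp
  have "length (Psi @ C) \<le> m*n"
    using injective_mat_dim_le[OF U_mat_carrier] basis_mats_U_mat_kernel[OF B] by blast
  then show r: "r \<le> m*n" and len': "length (Psi @ C) = m*n" using len by linarith+
  then show U: "U_mat m n (Psi @ C) \<in> carrier_mat (m*n) (m*n)" using U_mat_carrier[of m n "Psi @ C"] by simp
  show "invertible_mat (U_mat m n (Psi @ C))"
    unfolding invertible_mat_iff_kernel[OF U] using basis_mats_U_mat_kernel[OF B] len' by simp
qed

lemma U_mat_mult_padded_vec:
  assumes Gs: "\<forall>G\<in>set (Psi @ C). G \<in> carrier_mat m n" and len: "length (Psi @ C) = N"
  shows "U_mat m n (Psi @ C) *\<^sub>v vec N (\<lambda>l. if l < length Psi then c l else 0) =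
    vecz m n (lincomb_mats m n c Psi)"
proof -
  let ?w = "vec N (\<lambda>l. if l < length Psi then c l else 0)"
  have "lincomb_mats m n (\<lambda>l. ?w $ l) (Psi @ C) = lincomb_mats m n (\<lambda>l. ?w $ l) Psi"
    using Gs len by (intro lincomb_mats_append_zero) auto
  also have "\<dots> = lincomb_mats m n c Psi" using Gs len by (intro lincomb_mats_cong) auto
  finally show ?thesis using U_mat_mult_vec[OF Gs] len by simp
qed

lemma state_fmt_transpose:
  "state_fmt r m n Psi \<Longrightarrow> state_fmt r n m (map transpose_mat Psi)"
  unfolding state_fmt_def by auto

lemma slocc_equiv_of_sandwich:
  assumes S: "state_fmt r m n Psi" and S': "state_fmt r m n Psi'"
    and A: "A \<in> carrier_mat m m" "invertible_mat A" and B: "B \<in> carrier_mat n n" "invertible_mat B"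
    and P: "P \<in> carrier_mat r r" "invertible_mat P"
    and rel: "\<And>k. k < r \<Longrightarrow> A * (Psi' ! k) * B = lincomb_mats m n (\<lambda>l. P $$ (l,k)) Psi"
  shows "slocc_equiv m n Psi' Psi"
proof -
  obtain A' where A': "A' \<in> carrier_mat m m" "invertible_mat A'" "A' * A = 1\<^sub>m m"
    using invertible_mat_inverse[OF A] by metis
  obtain B' where B': "B' \<in> carrier_mat n n" "invertible_mat B'" "B * B' = 1\<^sub>m n"
    using invertible_mat_inverse[OF B] by metis
  have Ps: "\<forall>G\<in>set Psi. G \<in> carrier_mat m n" and Ps': "\<forall>G\<in>set Psi'. G \<in> carrier_mat m n"
    and len: "length Psi = r" "length Psi' = r" using S S' unfolding state_fmt_def by auto
  have "Psi' ! k = lincomb_mats m n (\<lambda>l. P\<^sup>T $$ (k,l)) (map (\<lambda>G. A' * G * B') Psi)"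
    if k: "k < r" for k
  proof -
    have "Psi' ! k = A' * (A * (Psi' ! k) * B) * B'"
      using mult_inverses_cancel[OF A(1) A'(1) A'(3) B(1) B'(1) B'(3)] Ps' k len by simp
    also have "\<dots> = lincomb_mats m n (\<lambda>l. P $$ (l,k)) (map (\<lambda>G. A' * G * B') Psi)"
      unfolding rel[OF k] by (rule mult_lincomb_mats[OF Ps A'(1) B'(1)])
    also have "\<dots> = lincomb_mats m n (\<lambda>l. P\<^sup>T $$ (k,l)) (map (\<lambda>G. A' * G * B') Psi)"
      using Ps A'(1) B'(1) P(1) k len by (intro lincomb_mats_cong) auto
    finally show ?thesis .
  qed
  then show ?thesis unfolding slocc_equiv_def
    using len P A'(1,2) B'(1,2) invertible_mat_transpose_iff[OF P(1)] invertible_mat_transpose_iff[OF B'(1)]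
    by (intro conjI exI[of _ "P\<^sup>T"] exI[of _ A'] exI[of _ "B'\<^sup>T"]) auto
qed

lemma slocc_equiv_imp_sandwich:
  assumes S: "state_fmt r m n Psi" and S': "state_fmt r m n Psi'" and "slocc_equiv m n Psi' Psi"
  obtains A B P where "A \<in> carrier_mat m m" "invertible_mat A" "B \<in> carrier_mat n n" "invertible_mat B"
    "P \<in> carrier_mat r r" "invertible_mat P"
    "\<And>k. k < r \<Longrightarrow> A * (Psi' ! k) * B = lincomb_mats m n (\<lambda>l. P $$ (l,k)) Psi"
proof -
  have Ps: "\<forall>G\<in>set Psi. G \<in> carrier_mat m n" and len: "length Psi = r"
    using S unfolding state_fmt_def by auto
  obtain P0 A1 A2 where P0: "P0 \<in> carrier_mat r r" "invertible_mat P0"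
    and A1: "A1 \<in> carrier_mat m m" "invertible_mat A1" and A2: "A2 \<in> carrier_mat n n" "invertible_mat A2"
    and rel: "\<And>k. k < r \<Longrightarrow> Psi' ! k = lincomb_mats m n (\<lambda>l. P0 $$ (k,l)) (map (\<lambda>G. A1 * G * A2\<^sup>T) Psi)"
    using assms(3) len unfolding slocc_equiv_def by auto
  have A2t: "A2\<^sup>T \<in> carrier_mat n n" "invertible_mat A2\<^sup>T"
    using A2 invertible_mat_transpose_iff[OF A2(1)] by auto
  obtain A where A: "A \<in> carrier_mat m m" "invertible_mat A" "A * A1 = 1\<^sub>m m"
    using invertible_mat_inverse[OF A1] by metis
  obtain B where B: "B \<in> carrier_mat n n" "invertible_mat B" "A2\<^sup>T * B = 1\<^sub>m n"
    using invertible_mat_inverse[OF A2t] by metis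
  have "A * (Psi' ! k) * B = lincomb_mats m n (\<lambda>l. P0\<^sup>T $$ (l,k)) Psi" if k: "k < r" for k
  proof -
    have "Psi' ! k = A1 * lincomb_mats m n (\<lambda>l. P0 $$ (k,l)) Psi * A2\<^sup>T"
      using rel[OF k] mult_lincomb_mats[OF Ps A1(1) A2t(1)] by simp
    then have "A * (Psi' ! k) * B = lincomb_mats m n (\<lambda>l. P0 $$ (k,l)) Psi"
      using mult_inverses_cancel[OF A1(1) A(1) A(3) A2t(1) B(1) B(3) lincomb_mats_carrier[OF Ps]] by simp
    also have "\<dots> = lincomb_mats m n (\<lambda>l. P0\<^sup>T $$ (l,k)) Psi"
      using Ps P0(1) k len by (intro lincomb_mats_cong) auto
    finally show ?thesis .
  qed
  moreover have "P0\<^sup>T \<in> carrier_mat r r" "invertible_mat P0\<^sup>T"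
    using P0 invertible_mat_transpose_iff[OF P0(1)] by auto
  ultimately show thesis using that A(1,2) B(1,2) by blast
qed

lemma slocc_equiv_transpose_of_sandwich:
  assumes S: "state_fmt r m m Psi" and S': "state_fmt r m m Psi'"
    and A: "A \<in> carrier_mat m m" "invertible_mat A" and B: "B \<in> carrier_mat m m" "invertible_mat B"
    and P: "P \<in> carrier_mat r r" "invertible_mat P"
    and rel: "\<And>k. k < r \<Longrightarrow> A * (Psi' ! k)\<^sup>T * B = lincomb_mats m m (\<lambda>l. P $$ (l,k)) Psi"
  shows "slocc_equiv m m Psi' (map transpose_mat Psi)"
proof (rule slocc_equiv_of_sandwich[OF state_fmt_transpose[OF S] S' _ _ _ _ P])
  have Ps: "\<forall>G\<in>set Psi. G \<in> carrier_mat m m" and Ps': "\<forall>G\<in>set Psi'. G \<in> carrier_mat m m"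
    and len': "length Psi' = r" using S S' unfolding state_fmt_def by auto
  fix k assume k: "k < r"
  have Gk: "Psi' ! k \<in> carrier_mat m m" using Ps' k len' by auto
  have "B\<^sup>T * (Psi' ! k) * A\<^sup>T = (A * (Psi' ! k)\<^sup>T * B)\<^sup>T"
    using A(1) B(1) Gk by (simp add: transpose_mult[of _ m m _ m])
  also have "\<dots> = lincomb_mats m m (\<lambda>l. P $$ (l,k)) (map transpose_mat Psi)"
    unfolding rel[OF k] by (rule transpose_lincomb_mats[OF Ps])
  finally show "B\<^sup>T * (Psi' ! k) * A\<^sup>T = lincomb_mats m m (\<lambda>l. P $$ (l,k)) (map transpose_mat Psi)" .
qed (use A B invertible_mat_transpose_iff in auto)

section \<open>The criterion\<close>

lemma mult_unit_vec_eq_col: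
  fixes A :: "'a::semiring_1 mat"
  assumes "A \<in> carrier_mat n n'" "k < n'"
  shows "A *\<^sub>v unit_vec n' k = col A k"
  using assms by (intro eq_vecI) auto

lemma four_block_mat_lower_left_zero_split:
  fixes Pt :: "'a::field mat"
  assumes Pt: "Pt \<in> carrier_mat N N" "invertible_mat Pt" and rN: "r \<le> N"
    and lower: "\<And>l k. r \<le> l \<Longrightarrow> l < N \<Longrightarrow> k < r \<Longrightarrow> Pt $$ (l,k) = 0"
  obtains P Y Pb where "P \<in> carrier_mat r r" "invertible_mat P"
    "Pb \<in> carrier_mat (N - r) (N - r)" "invertible_mat Pb" "Y \<in> carrier_mat r (N - r)"
    "Pt = four_block_mat P Y (0\<^sub>m (N - r) r) Pb"
proof -
  define P where "P = mat r r (\<lambda>(l,k). Pt $$ (l,k))"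
  define Y where "Y = mat r (N - r) (\<lambda>(l,k). Pt $$ (l, k + r))"
  define Pb where "Pb = mat (N - r) (N - r) (\<lambda>(l,k). Pt $$ (l + r, k + r))"
  have P: "P \<in> carrier_mat r r" and Y: "Y \<in> carrier_mat r (N - r)"
    and Pb: "Pb \<in> carrier_mat (N - r) (N - r)" unfolding P_def Y_def Pb_def by auto
  have Pt4: "Pt = four_block_mat P Y (0\<^sub>m (N - r) r) Pb"
  proof (rule eq_matI)
    fix i j assume "i < dim_row (four_block_mat P Y (0\<^sub>m (N - r) r) Pb)"
      "j < dim_col (four_block_mat P Y (0\<^sub>m (N - r) r) Pb)"
    then have "i < N" "j < N" using P Pb rN by auto
    then show "Pt $$ (i,j) = four_block_mat P Y (0\<^sub>m (N - r) r) Pb $$ (i,j)"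
      using rN lower[of i j] unfolding P_def Y_def Pb_def by auto
  qed (use Pt P Pb rN in auto)
  have "det Pt = det P * det Pb" unfolding Pt4 by (rule det_four_block_mat_lower_left_zero[OF P Y refl Pb])
  moreover have "det Pt \<noteq> 0" using invertible_mat_iff_det[OF Pt(1)] Pt(2) by simp
  ultimately have "det P * det Pb \<noteq> 0" by simp
  then have "invertible_mat P" "invertible_mat Pb"
    using invertible_mat_iff_det[OF P] invertible_mat_iff_det[OF Pb] by auto
  with P Y Pb Pt4 that show thesis by blast
qed

lemma invertible_four_block_mat_lower_left_zero:
  fixes P :: "'a::field mat"
  assumes P: "P \<in> carrier_mat r r" "invertible_mat P" and Y: "Y \<in> carrier_mat r s"
    and Pb: "Pb \<in> carrier_mat s s" "invertible_mat Pb"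
  shows "invertible_mat (four_block_mat P Y (0\<^sub>m s r) Pb)"
proof -
  have "det (four_block_mat P Y (0\<^sub>m s r) Pb) = det P * det Pb"
    by (rule det_four_block_mat_lower_left_zero[OF P(1) Y refl Pb(1)])
  then show ?thesis using P Pb four_block_carrier_mat[OF P(1) Pb(1)]
    by (simp add: invertible_mat_iff_det[of _ "r + s"] invertible_mat_iff_det[of _ r] invertible_mat_iff_det[of _ s])
qed

lemma preserves_rank_sandwich_mat:
  assumes A: "A \<in> carrier_mat m m" "invertible_mat A" and B: "B \<in> carrier_mat n n" "invertible_mat B"
  shows "preserves_rank m n (sandwich_mat m n A B)"
  unfolding preserves_rank_def
proof
  fix a :: "complex vec" assume "a \<in> carrier_vec (m*n)"
  then have "foldv m n (sandwich_mat m n A B *\<^sub>v a) = mat_action m n (sandwich_mat m n A B) (foldv m n a)"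
    unfolding mat_action_def by (simp add: vecz_foldv)
  also have "\<dots> = A * foldv m n a * B" by (rule mat_action_sandwich_mat[OF A(1) B(1) foldv_carrier])
  finally show "mrank (foldv m n (sandwich_mat m n A B *\<^sub>v a)) = mrank (foldv m n a)"
    using mrank_mult_invertible[OF A B foldv_carrier] by simp
qed

locale complementary_pair =
  fixes r m n :: nat and Psi Psi' C C' :: "complex mat list"
  assumes state: "state_fmt r m n Psi" and state': "state_fmt r m n Psi'"
    and compl: "complementary m n Psi C" and compl': "complementary m n Psi' C'"
begin

abbreviation "N \<equiv> m * n"
abbreviation "U \<equiv> U_mat m n (Psi @ C)"
abbreviation "U' \<equiv> U_mat m n (Psi' @ C')"

lemma r_le_N: "r \<le> N"
  and U: "U \<in> carrier_mat N N" "invertible_mat U"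
  and U': "U' \<in> carrier_mat N N" "invertible_mat U'"
  using complementary_U_mat[OF state compl] complementary_U_mat[OF state' compl'] by auto

lemma Psi_carrier: "\<forall>G\<in>set (Psi @ C). G \<in> carrier_mat m n" "length (Psi @ C) = N" "length Psi = r"
    "\<forall>G\<in>set Psi. G \<in> carrier_mat m n"
  using complementary_U_mat[OF state compl] state unfolding state_fmt_def by simp_all

lemma Psi'_carrier: "k < r \<Longrightarrow> Psi' ! k \<in> carrier_mat m n"
  using state' unfolding state_fmt_def by auto

definition padded :: "(nat \<Rightarrow> complex) \<Rightarrow> complex vec" where
  "padded c = vec N (\<lambda>l. if l < r then c l else 0)"

lemma U_mult_padded: "U *\<^sub>v padded c = vecz m n (lincomb_mats m n c Psi)"
  unfolding padded_def using U_mat_mult_padded_vec[OF Psi_carrier(1,2)] Psi_carrier(3) by simp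

text \<open>Because \<open>U'\<close> maps the \<open>k\<close>-th unit vector to \<open>vecz \<Psi>'\<^sub>k\<close>.\<close>

lemma conj_mult_state:
  assumes Pt: "Pt \<in> carrier_mat N N" and k: "k < r"
  shows "(U * Pt * mat_inv U') *\<^sub>v vecz m n (Psi' ! k) = U *\<^sub>v col Pt k"
proof -
  note inv = mat_inv[OF U']
  have "U' *\<^sub>v unit_vec N k = vecz m n (Psi' ! k)"
    using U_mat_mult_unit_vec[of k "Psi' @ C'" m n] complementary_U_mat[OF state' compl'] state' k
    unfolding state_fmt_def by (simp add: nth_append)
  then have "mat_inv U' *\<^sub>v vecz m n (Psi' ! k) = (mat_inv U' * U') *\<^sub>v unit_vec N k"
    using assoc_mult_mat_vec[OF inv(1) U'(1), of "unit_vec N k"] by simp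
  also have "\<dots> = unit_vec N k" using inv(3) by simp
  finally have "mat_inv U' *\<^sub>v vecz m n (Psi' ! k) = unit_vec N k" .
  moreover have "Pt *\<^sub>v unit_vec N k = col Pt k" using Pt k r_le_N by (intro mult_unit_vec_eq_col) auto
  ultimately show ?thesis using U(1) Pt inv(1) by (simp add: assoc_mult_mat_vec[of _ N N _ N])
qed

lemma conj_action_state_iff:
  assumes Pt: "Pt \<in> carrier_mat N N" and k: "k < r"
  shows "mat_action m n (U * Pt * mat_inv U') (Psi' ! k) = lincomb_mats m n c Psi \<longleftrightarrow> col Pt k = padded c"
proof -
  have M: "U * Pt * mat_inv U' \<in> carrier_mat N N" using U Pt mat_inv[OF U'] by simp
  have col: "col Pt k \<in> carrier_vec N" using col_dim[of Pt k] Pt by simp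
  have pad: "padded c \<in> carrier_vec N" by (simp add: padded_def)
  have "mat_action m n (U * Pt * mat_inv U') (Psi' ! k) = lincomb_mats m n c Psi \<longleftrightarrow>
      vecz m n (mat_action m n (U * Pt * mat_inv U') (Psi' ! k)) = vecz m n (lincomb_mats m n c Psi)"
    using vecz_inject[OF mat_action_carrier lincomb_mats_carrier[OF Psi_carrier(4)]] by simp
  also have "\<dots> \<longleftrightarrow> U *\<^sub>v col Pt k = U *\<^sub>v padded c"
    unfolding vecz_mat_action[OF M] conj_mult_state[OF Pt k] U_mult_padded ..
  also have "\<dots> \<longleftrightarrow> col Pt k = padded c"
    using invertible_mat_mult_vec_cancel[OF U col pad] by auto
  finally show ?thesis .
qed

lemma slocc_equiv_imp_cond_star:
  assumes "slocc_equiv m n Psi' Psi"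
  shows "cond_star r m n U U'"
proof -
  obtain A B P where A: "A \<in> carrier_mat m m" "invertible_mat A" and B: "B \<in> carrier_mat n n" "invertible_mat B"
    and P: "P \<in> carrier_mat r r" "invertible_mat P"
    and rel: "\<And>k. k < r \<Longrightarrow> A * (Psi' ! k) * B = lincomb_mats m n (\<lambda>l. P $$ (l,k)) Psi"
    using slocc_equiv_imp_sandwich[OF state state' assms] by blast
  define K where "K = sandwich_mat m n A B"
  have K: "K \<in> carrier_mat N N" "invertible_mat K" unfolding K_def using invertible_sandwich_mat[OF A B] by simp_all
  note inv = mat_inv[OF U] mat_inv[OF U']
  define Pt where "Pt = mat_inv U * K * U'"
  have Pt: "Pt \<in> carrier_mat N N" "invertible_mat Pt"
    unfolding Pt_def using inv U U' K invertible_mat_inv[OF U] by (simp_all add: invertible_mat_mult)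
  have UPt: "U * Pt * mat_inv U' = K"
    unfolding Pt_def by (rule mult_inverses_cancel[OF inv(1) U(1) inv(2) U'(1) inv(4) inv(5) K(1)])
  have col_Pt: "col Pt k = padded (\<lambda>l. P $$ (l,k))" if k: "k < r" for k
  proof -
    have "mat_action m n (U * Pt * mat_inv U') (Psi' ! k) = lincomb_mats m n (\<lambda>l. P $$ (l,k)) Psi"
      unfolding UPt K_def mat_action_sandwich_mat[OF A(1) B(1) Psi'_carrier[OF k]] by (rule rel[OF k])
    then show ?thesis using conj_action_state_iff[OF Pt(1) k] by simp
  qed
  have "Pt $$ (l,k) = 0" if "r \<le> l" "l < N" "k < r" for l k
  proof -
    have "col Pt k $ l = padded (\<lambda>l. P $$ (l,k)) $ l" using col_Pt[OF that(3)] by simp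
    then show ?thesis using that Pt(1) r_le_N by (simp add: padded_def)
  qed
  then obtain P' Y Pb where P': "P' \<in> carrier_mat r r" "invertible_mat P'"
    and Pb: "Pb \<in> carrier_mat (N - r) (N - r)" "invertible_mat Pb" and Y: "Y \<in> carrier_mat r (N - r)"
    and Pt_blocks: "Pt = four_block_mat P' Y (0\<^sub>m (N - r) r) Pb"
    by (rule four_block_mat_lower_left_zero_split[OF Pt r_le_N])
  have "preserves_rank m n (U * four_block_mat P' Y (0\<^sub>m (N - r) r) Pb * mat_inv U')"
    unfolding Pt_blocks[symmetric] UPt K_def by (rule preserves_rank_sandwich_mat[OF A B])
  then show ?thesis unfolding cond_star_def Let_def preserves_rank_def
    using P' Pb Y by (intro exI[of _ P'] exI[of _ Pb] exI[of _ Y]) simp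
qed

lemma cond_star_imp_slocc_equiv:
  assumes "cond_star r m n U U'"
  shows "slocc_equiv m n Psi' Psi \<or> (m = n \<and> slocc_equiv m n Psi' (map transpose_mat Psi))"
proof -
  obtain P Pb Y where P: "P \<in> carrier_mat r r" "invertible_mat P"
    and Pb: "Pb \<in> carrier_mat (N - r) (N - r)" "invertible_mat Pb" and Y: "Y \<in> carrier_mat r (N - r)"
    and rk: "preserves_rank m n (U * four_block_mat P Y (0\<^sub>m (N - r) r) Pb * mat_inv U')"
    using assms unfolding cond_star_def Let_def preserves_rank_def by blast
  define Pt where "Pt = four_block_mat P Y (0\<^sub>m (N - r) r) Pb"
  have Pt_carrier: "Pt \<in> carrier_mat N N"
    unfolding Pt_def using four_block_carrier_mat[OF P(1) Pb(1)] r_le_N by simp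
  have "invertible_mat Pt" unfolding Pt_def by (rule invertible_four_block_mat_lower_left_zero[OF P Y Pb])
  define M where "M = U * Pt * mat_inv U'"
  have M: "M \<in> carrier_mat N N" "invertible_mat M"
    unfolding M_def using U U' Pt_carrier \<open>invertible_mat Pt\<close> mat_inv[OF U'] invertible_mat_inv[OF U']
    by (simp_all add: invertible_mat_mult)
  have rel: "mat_action m n M (Psi' ! k) = lincomb_mats m n (\<lambda>l. P $$ (l,k)) Psi" if k: "k < r" for k
  proof -
    have "col Pt k = padded (\<lambda>l. P $$ (l,k))"
      unfolding Pt_def padded_def using P(1) Pb(1) Y k r_le_N by (intro eq_vecI) auto
    then show ?thesis unfolding M_def using conj_action_state_iff[OF Pt_carrier k] by simp
  qed
  show ?thesis
  proof (rule rank_preserving_mat_action_cases[OF M rk[folded Pt_def M_def]])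
    fix A B assume A: "A \<in> carrier_mat m m" "invertible_mat A" and B: "B \<in> carrier_mat n n" "invertible_mat B"
      and AXB: "\<And>X. X \<in> carrier_mat m n \<Longrightarrow> mat_action m n M X = A * X * B"
    have "slocc_equiv m n Psi' Psi"
      using slocc_equiv_of_sandwich[OF state state' A B P] rel AXB Psi'_carrier by simp
    then show ?thesis ..
  next
    fix A B assume mn: "m = n" and A: "A \<in> carrier_mat m m" "invertible_mat A"
      and B: "B \<in> carrier_mat m m" "invertible_mat B"
      and AXB: "\<And>X. X \<in> carrier_mat m n \<Longrightarrow> mat_action m n M X = A * X\<^sup>T * B"
    have "slocc_equiv m m Psi' (map transpose_mat Psi)"
      using slocc_equiv_transpose_of_sandwich[OF state[folded mn] state'[folded mn] A B P]
        rel AXB Psi'_carrier mn by simp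
    with mn show ?thesis by simp
  qed
qed

end

theorem corollary1:
  fixes r I1 I2 :: nat and Psi Psi' C C' :: "complex mat list"
  assumes "state_fmt r I1 I2 Psi" and "state_fmt r I1 I2 Psi'"
    and "lin_indep_mats I1 I2 Psi" and "lin_indep_mats I1 I2 Psi'"
    and "complementary I1 I2 Psi C" and "complementary I1 I2 Psi' C'"
  defines "U \<equiv> U_mat I1 I2 (Psi @ C)" and "U' \<equiv> U_mat I1 I2 (Psi' @ C')"
  shows "(slocc_equiv I1 I2 Psi' Psi \<longrightarrow> cond_star r I1 I2 U U')
    \<and> (I1 \<noteq> I2 \<and> cond_star r I1 I2 U U' \<longrightarrow> slocc_equiv I1 I2 Psi' Psi)
    \<and> (I1 = I2 \<and> cond_star r I1 I2 U U' \<longrightarrow>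
         slocc_equiv I1 I2 Psi' Psi \<or> slocc_equiv I1 I2 Psi' (map transpose_mat Psi))"
proof -
  interpret complementary_pair r I1 I2 Psi Psi' C C'
    using assms(1,2,5,6) by unfold_locales
  have "slocc_equiv I1 I2 Psi' Psi \<Longrightarrow> cond_star r I1 I2 U U'"
    unfolding U_def U'_def by (rule slocc_equiv_imp_cond_star)
  moreover have "cond_star r I1 I2 U U' \<Longrightarrow>
      slocc_equiv I1 I2 Psi' Psi \<or> (I1 = I2 \<and> slocc_equiv I1 I2 Psi' (map transpose_mat Psi))"
    unfolding U_def U'_def by (rule cond_star_imp_slocc_equiv)
  ultimately show ?thesis by blast
qed

end
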